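(* Let $(A,\sigma)$ be a ribbon algebra in a braided monoidal category $\mathcal C$ which is also a Hopf algebra in $\mathcal C$ with invertible antipode $S$, and let $M$ be an $A$-bimodule in $\mathcal C$. Then the morphism $$\blacktriangleleft_R=\triangleleft\;\triangleright_{0,1}\,(\sigma S^{-1}\otimes\mathrm{id}^{\otimes2})\,\Psi_{0,1}\,(\mathrm{id}_M\otimes\Delta):M\otimes A\to M$$ is a right action of $A$ on $M$, i.e. $\blacktriangleleft_R(\blacktriangleleft_R\otimes\mathrm{id}_A)=\blacktriangleleft_R(\mathrm{id}_M\otimes\mu)$. (Here $\Psi_{0,1}:M\otimes A\otimes A\to A\otimes M\otimes A$ braids $M$ with the first copy of $A$.)
   Context: $\mathcal C$ is a braided monoidal category with abelian-group Hom-sets, bilinear composition and tensor product; associativity and unit constraints suppressed; unit object $\mathbf 1$; braiding $\Psi$. Composition read from right to left; in $V_0\otimes\cdots\otimes V_k$ (factors numbered from 0), $f_{i,i+1}$ denotes $f$ applied to factors $i,i+1$. An algebra in $\mathcal C$: object $A$ with associative unital $\mu:A\otimes A\to A$, $\eta:\mathbf 1\to A$. Ribbon algebra: algebra with invertible morphism $\sigma:A\to A$, $\sigma\mu=\mu(\sigma\otimes\sigma)\Psi^2$, $\sigma\eta=\eta$. A Hopf algebra in $\mathcal C$ is an algebra $A$ with morphisms $\Delta:A\to A\otimes A$, $\varepsilon:A\to\mathbf1$ forming a coassociative counital coalgebra, such that $\Delta\mu=(\mu\otimes\mu)\Psi_{1,2}(\Delta\otimes\Delta)$, $\varepsilon\mu=\varepsilon\otimes\varepsilon$,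 $\Delta\eta=\eta\otimes\eta$, $\varepsilon\eta=\mathrm{id}_{\mathbf 1}$, together with a morphism $S:A\to A$ (antipode) with $\mu(S\otimes\mathrm{id})\Delta=\eta\varepsilon=\mu(\mathrm{id}\otimes S)\Delta$. An $A$-bimodule in $\mathcal C$: object $M$ with morphisms $\triangleright:A\otimes M\to M$, $\triangleleft:M\otimes A\to M$, associative unital left resp. right actions with $\triangleright(\mathrm{id}\otimes\triangleleft)=\triangleleft(\triangleright\otimes\mathrm{id})$. *)

theory Defs
  imports Main
begin

text \<open>A (strict) braided monoidal category, given concretely: objects of type 'o,
morphisms of type 'm, partial composition (cmp g f = g after f, defined when
cd f = dm g), tensor on objects (tob) and morphisms (tar), unit object un and
braiding brd a b : a (x) b -> b (x) a.  Associativity and unit constraints are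
suppressed, i.e. the category is taken strict.\<close>

record ('o, 'm) bmc =
  Obj :: "'o set"
  Arr :: "'m set"
  dm  :: "'m \<Rightarrow> 'o"
  cd  :: "'m \<Rightarrow> 'o"
  cmp :: "'m \<Rightarrow> 'm \<Rightarrow> 'm"
  idm :: "'o \<Rightarrow> 'm"
  tob :: "'o \<Rightarrow> 'o \<Rightarrow> 'o"
  tar :: "'m \<Rightarrow> 'm \<Rightarrow> 'm"
  un  :: "'o"
  brd :: "'o \<Rightarrow> 'o \<Rightarrow> 'm"

definition hom :: "('o, 'm) bmc \<Rightarrow> 'o \<Rightarrow> 'o \<Rightarrow> 'm set" where
  "hom C a b = {f \<in> Arr C. dm C f = a \<and> cd C f = b}"

definition iso_mor :: "('o, 'm) bmc \<Rightarrow> 'm \<Rightarrow> 'o \<Rightarrow> 'o \<Rightarrow> bool" where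
  "iso_mor C f a b \<longleftrightarrow> f \<in> hom C a b \<and>
     (\<exists>g \<in> hom C b a. cmp C g f = idm C a \<and> cmp C f g = idm C b)"

definition braided_strict_monoidal :: "('o, 'm) bmc \<Rightarrow> bool" where
  "braided_strict_monoidal C \<longleftrightarrow>
   \<comment> \<open>category\<close>
   (\<forall>f \<in> Arr C. dm C f \<in> Obj C \<and> cd C f \<in> Obj C) \<and>
   (\<forall>a \<in> Obj C. idm C a \<in> hom C a a) \<and>
   (\<forall>a \<in> Obj C. \<forall>b \<in> Obj C. \<forall>c \<in> Obj C. \<forall>f \<in> hom C a b. \<forall>g \<in> hom C b c.
       cmp C g f \<in> hom C a c) \<and>
   (\<forall>f \<in> Arr C. cmp C (idm C (cd C f)) f = f \<and> cmp C f (idm C (dm C f)) = f) \<and>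
   (\<forall>f \<in> Arr C. \<forall>g \<in> Arr C. \<forall>h \<in> Arr C. cd C f = dm C g \<longrightarrow> cd C g = dm C h \<longrightarrow>
       cmp C h (cmp C g f) = cmp C (cmp C h g) f) \<and>
   \<comment> \<open>tensor product functor\<close>
   un C \<in> Obj C \<and>
   (\<forall>a \<in> Obj C. \<forall>b \<in> Obj C. tob C a b \<in> Obj C) \<and>
   (\<forall>f \<in> Arr C. \<forall>g \<in> Arr C.
       tar C f g \<in> hom C (tob C (dm C f) (dm C g)) (tob C (cd C f) (cd C g))) \<and>
   (\<forall>a \<in> Obj C. \<forall>b \<in> Obj C. tar C (idm C a) (idm C b) = idm C (tob C a b)) \<and>
   (\<forall>f \<in> Arr C. \<forall>f' \<in> Arr C. \<forall>g \<in> Arr C. \<forall>g' \<in> Arr C.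
       cd C f = dm C f' \<longrightarrow> cd C g = dm C g' \<longrightarrow>
       tar C (cmp C f' f) (cmp C g' g) = cmp C (tar C f' g') (tar C f g)) \<and>
   \<comment> \<open>strict associativity and unit\<close>
   (\<forall>a \<in> Obj C. \<forall>b \<in> Obj C. \<forall>c \<in> Obj C. tob C (tob C a b) c = tob C a (tob C b c)) \<and>
   (\<forall>f \<in> Arr C. \<forall>g \<in> Arr C. \<forall>h \<in> Arr C. tar C (tar C f g) h = tar C f (tar C g h)) \<and>
   (\<forall>a \<in> Obj C. tob C (un C) a = a \<and> tob C a (un C) = a) \<and>
   (\<forall>f \<in> Arr C. tar C (idm C (un C)) f = f \<and> tar C f (idm C (un C)) = f) \<and>
   \<comment> \<open>braiding: natural isomorphism satisfying the hexagon axioms\<close>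
   (\<forall>a \<in> Obj C. \<forall>b \<in> Obj C. iso_mor C (brd C a b) (tob C a b) (tob C b a)) \<and>
   (\<forall>f \<in> Arr C. \<forall>g \<in> Arr C.
       cmp C (tar C g f) (brd C (dm C f) (dm C g)) = cmp C (brd C (cd C f) (cd C g)) (tar C f g)) \<and>
   (\<forall>a \<in> Obj C. \<forall>b \<in> Obj C. \<forall>c \<in> Obj C.
       brd C a (tob C b c) = cmp C (tar C (idm C b) (brd C a c)) (tar C (brd C a b) (idm C c)) \<and>
       brd C (tob C a b) c = cmp C (tar C (brd C a c) (idm C b)) (tar C (idm C a) (brd C b c)))"

definition is_algebra :: "('o, 'm) bmc \<Rightarrow> 'o \<Rightarrow> 'm \<Rightarrow> 'm \<Rightarrow> bool" where
  "is_algebra C A mu eta \<longleftrightarrow>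
     A \<in> Obj C \<and> mu \<in> hom C (tob C A A) A \<and> eta \<in> hom C (un C) A \<and>
     cmp C mu (tar C mu (idm C A)) = cmp C mu (tar C (idm C A) mu) \<and>
     cmp C mu (tar C eta (idm C A)) = idm C A \<and>
     cmp C mu (tar C (idm C A) eta) = idm C A"

definition is_ribbon_algebra :: "('o, 'm) bmc \<Rightarrow> 'o \<Rightarrow> 'm \<Rightarrow> 'm \<Rightarrow> 'm \<Rightarrow> bool" where
  "is_ribbon_algebra C A mu eta sigma \<longleftrightarrow>
     is_algebra C A mu eta \<and> iso_mor C sigma A A \<and>
     cmp C sigma mu = cmp C mu (cmp C (tar C sigma sigma)
                        (cmp C (brd C A A) (brd C A A))) \<and>
     cmp C sigma eta = eta"

definition is_hopf_algebra ::
  "('o, 'm) bmc \<Rightarrow> 'o \<Rightarrow> 'm \<Rightarrow> 'm \<Rightarrow> 'm \<Rightarrow> 'm \<Rightarrow> 'm \<Rightarrow> bool" where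
  "is_hopf_algebra C A mu eta delta eps S \<longleftrightarrow>
     is_algebra C A mu eta \<and>
     delta \<in> hom C A (tob C A A) \<and> eps \<in> hom C A (un C) \<and> S \<in> hom C A A \<and>
     cmp C (tar C delta (idm C A)) delta = cmp C (tar C (idm C A) delta) delta \<and>
     cmp C (tar C eps (idm C A)) delta = idm C A \<and>
     cmp C (tar C (idm C A) eps) delta = idm C A \<and>
     cmp C delta mu = cmp C (tar C mu mu)
        (cmp C (tar C (idm C A) (tar C (brd C A A) (idm C A))) (tar C delta delta)) \<and>
     cmp C eps mu = tar C eps eps \<and>
     cmp C delta eta = tar C eta eta \<and>
     cmp C eps eta = idm C (un C) \<and>
     cmp C mu (cmp C (tar C S (idm C A)) delta) = cmp C eta eps \<and>
     cmp C mu (cmp C (tar C (idm C A) S) delta) = cmp C eta eps"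

definition is_bimodule ::
  "('o, 'm) bmc \<Rightarrow> 'o \<Rightarrow> 'm \<Rightarrow> 'm \<Rightarrow> 'o \<Rightarrow> 'm \<Rightarrow> 'm \<Rightarrow> bool" where
  "is_bimodule C A mu eta M lact ract \<longleftrightarrow>
     M \<in> Obj C \<and> lact \<in> hom C (tob C A M) M \<and> ract \<in> hom C (tob C M A) M \<and>
     cmp C lact (tar C mu (idm C M)) = cmp C lact (tar C (idm C A) lact) \<and>
     cmp C lact (tar C eta (idm C M)) = idm C M \<and>
     cmp C ract (tar C ract (idm C A)) = cmp C ract (tar C (idm C M) mu) \<and>
     cmp C ract (tar C (idm C M) eta) = idm C M \<and>
     cmp C lact (tar C (idm C A) ract) = cmp C ract (tar C lact (idm C A))"

definition twisted_ract ::
  "('o, 'm) bmc \<Rightarrow> 'o \<Rightarrow> 'o \<Rightarrow> 'm \<Rightarrow> 'm \<Rightarrow> 'm \<Rightarrow> 'm \<Rightarrow> 'm \<Rightarrow> 'm" where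
  "twisted_ract C A M delta sigma Sinv lact ract =
     cmp C ract (cmp C (tar C lact (idm C A))
       (cmp C (tar C (cmp C sigma Sinv) (tar C (idm C M) (idm C A)))
         (cmp C (tar C (brd C M A) (idm C A)) (tar C (idm C M) delta))))"

end

(*
  Put tau = sigma S^-1.  In Sweedler notation the twisted action reads
  m . a = (tau a1) |> m <| a2, where a1 is braided past m.  Everything rests on tau being a
  braided anti-homomorphism, tau mu = mu (tau (x) tau) Psi.  For S this is the classical
  convolution argument: S mu and mu (S (x) S) Psi are both inverse to mu in the convolution
  algebra Hom(A (x) A, A).  Inverting S gives S^-1 mu = mu (S^-1 (x) S^-1) Psi^-1, and the
  ribbon identity sigma mu = mu (sigma (x) sigma) Psi^2 turns Psi^-1 into Psi.  Now
  (m . a) . b = m . (a b) follows by expanding Delta (a b) with the bialgebra axiom, pushing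
  tau through the product, and regrouping the actions by their associativity and the
  bimodule axiom.
*)
theory Submission
  imports Defs
begin

section \<open>Strict braided monoidal categories\<close>

locale strict_braided =
  fixes C :: "('o, 'm) bmc"
  assumes strict_braided: "braided_strict_monoidal C"
begin

abbreviation comp (infixr "\<cdot>" 55) where "g \<cdot> f \<equiv> cmp C g f"
abbreviation tensor (infixr "\<otimes>" 60) where "f \<otimes> g \<equiv> tar C f g"
abbreviation tensor_obj (infixr "\<oplus>" 60) where "a \<oplus> b \<equiv> tob C a b"
abbreviation ident ("\<one>\<^bsub>_\<^esub>") where "\<one>\<^bsub>a\<^esub> \<equiv> idm C a"

lemma hom_Obj: "f \<in> hom C a b \<Longrightarrow> a \<in> Obj C" "f \<in> hom C a b \<Longrightarrow> b \<in> Obj C"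
  using strict_braided unfolding braided_strict_monoidal_def hom_def by auto

lemma id_hom: "a \<in> Obj C \<Longrightarrow> \<one>\<^bsub>a\<^esub> \<in> hom C a a"
  using strict_braided unfolding braided_strict_monoidal_def by auto

lemma comp_hom: "f \<in> hom C a b \<Longrightarrow> g \<in> hom C b c \<Longrightarrow> g \<cdot> f \<in> hom C a c"
  using strict_braided hom_Obj unfolding braided_strict_monoidal_def by metis

lemma comp_id_left: "f \<in> hom C a b \<Longrightarrow> \<one>\<^bsub>b\<^esub> \<cdot> f = f"
  and comp_id_right: "f \<in> hom C a b \<Longrightarrow> f \<cdot> \<one>\<^bsub>a\<^esub> = f"
  using strict_braided unfolding braided_strict_monoidal_def hom_def by auto

lemma comp_assoc:
  "f \<in> hom C a b \<Longrightarrow> g \<in> hom C b c \<Longrightarrow> h \<in> hom C c d \<Longrightarrow> h \<cdot> (g \<cdot> f) = (h \<cdot> g) \<cdot> f"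
  using strict_braided unfolding braided_strict_monoidal_def hom_def by auto

lemma unit_Obj [simp]: "un C \<in> Obj C"
  and tensor_Obj [simp]: "a \<in> Obj C \<Longrightarrow> b \<in> Obj C \<Longrightarrow> a \<oplus> b \<in> Obj C"
  using strict_braided unfolding braided_strict_monoidal_def by auto

lemma tensor_hom: "f \<in> hom C a b \<Longrightarrow> g \<in> hom C c d \<Longrightarrow> f \<otimes> g \<in> hom C (a \<oplus> c) (b \<oplus> d)"
  using strict_braided unfolding braided_strict_monoidal_def hom_def by auto

lemma tensor_id: "a \<in> Obj C \<Longrightarrow> b \<in> Obj C \<Longrightarrow> \<one>\<^bsub>a\<^esub> \<otimes> \<one>\<^bsub>b\<^esub> = \<one>\<^bsub>a \<oplus> b\<^esub>"
  using strict_braided unfolding braided_strict_monoidal_def by auto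

lemma interchange:
  "f \<in> hom C a b \<Longrightarrow> f' \<in> hom C b c \<Longrightarrow> g \<in> hom C x y \<Longrightarrow> g' \<in> hom C y z \<Longrightarrow>
   (f' \<cdot> f) \<otimes> (g' \<cdot> g) = (f' \<otimes> g') \<cdot> (f \<otimes> g)"
  using strict_braided unfolding braided_strict_monoidal_def hom_def by auto

lemma tensor_obj_assoc:
  "a \<in> Obj C \<Longrightarrow> b \<in> Obj C \<Longrightarrow> c \<in> Obj C \<Longrightarrow> (a \<oplus> b) \<oplus> c = a \<oplus> (b \<oplus> c)"
  using strict_braided unfolding braided_strict_monoidal_def by auto

lemma tensor_assoc:
  "f \<in> hom C a b \<Longrightarrow> g \<in> hom C c d \<Longrightarrow> h \<in> hom C x y \<Longrightarrow> (f \<otimes> g) \<otimes> h = f \<otimes> (g \<otimes> h)"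
  using strict_braided unfolding braided_strict_monoidal_def hom_def by auto

lemma tensor_obj_unit [simp]: "a \<in> Obj C \<Longrightarrow> un C \<oplus> a = a" "a \<in> Obj C \<Longrightarrow> a \<oplus> un C = a"
  using strict_braided unfolding braided_strict_monoidal_def by auto

lemma tensor_unit: "f \<in> hom C a b \<Longrightarrow> \<one>\<^bsub>un C\<^esub> \<otimes> f = f" "f \<in> hom C a b \<Longrightarrow> f \<otimes> \<one>\<^bsub>un C\<^esub> = f"
  using strict_braided unfolding braided_strict_monoidal_def hom_def by auto

lemma braid_iso: "a \<in> Obj C \<Longrightarrow> b \<in> Obj C \<Longrightarrow> iso_mor C (brd C a b) (a \<oplus> b) (b \<oplus> a)"
  using strict_braided unfolding braided_strict_monoidal_def by auto

lemma braid_hom: "a \<in> Obj C \<Longrightarrow> b \<in> Obj C \<Longrightarrow> brd C a b \<in> hom C (a \<oplus> b) (b \<oplus> a)"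
  using braid_iso iso_mor_def by metis

lemma braid_natural:
  "f \<in> hom C a b \<Longrightarrow> g \<in> hom C c d \<Longrightarrow> (g \<otimes> f) \<cdot> brd C a c = brd C b d \<cdot> (f \<otimes> g)"
  using strict_braided unfolding braided_strict_monoidal_def hom_def by auto

lemma braid_hexagon_left: "a \<in> Obj C \<Longrightarrow> b \<in> Obj C \<Longrightarrow> c \<in> Obj C \<Longrightarrow>
   brd C a (b \<oplus> c) = (\<one>\<^bsub>b\<^esub> \<otimes> brd C a c) \<cdot> (brd C a b \<otimes> \<one>\<^bsub>c\<^esub>)"
  and braid_hexagon_right: "a \<in> Obj C \<Longrightarrow> b \<in> Obj C \<Longrightarrow> c \<in> Obj C \<Longrightarrow>
   brd C (a \<oplus> b) c = (brd C a c \<otimes> \<one>\<^bsub>b\<^esub>) \<cdot> (\<one>\<^bsub>a\<^esub> \<otimes> brd C b c)"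
  using strict_braided unfolding braided_strict_monoidal_def by auto

lemma id_tensor_hom: "a \<in> Obj C \<Longrightarrow> f \<in> hom C b c \<Longrightarrow> \<one>\<^bsub>a\<^esub> \<otimes> f \<in> hom C (a \<oplus> b) (a \<oplus> c)"
  and tensor_id_hom: "a \<in> Obj C \<Longrightarrow> f \<in> hom C b c \<Longrightarrow> f \<otimes> \<one>\<^bsub>a\<^esub> \<in> hom C (b \<oplus> a) (c \<oplus> a)"
  by (intro tensor_hom id_hom; assumption)+

lemma invertible_idempotent_eq_id:
  assumes f: "f \<in> hom C a a" and idem: "f = f \<cdot> f" and inv: "iso_mor C f a a"
  shows "f = \<one>\<^bsub>a\<^esub>"
proof -
  obtain g where g: "g \<in> hom C a a" "g \<cdot> f = \<one>\<^bsub>a\<^esub>"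
    using inv unfolding iso_mor_def by auto
  have "\<one>\<^bsub>a\<^esub> = g \<cdot> (f \<cdot> f)" using idem g by simp
  also have "\<dots> = f" using comp_assoc[OF f f g(1)] g(2) comp_id_left[OF f] by simp
  finally show ?thesis by simp
qed

lemma braid_unit_right: "a \<in> Obj C \<Longrightarrow> brd C a (un C) = \<one>\<^bsub>a\<^esub>"
proof -
  assume a: "a \<in> Obj C"
  let ?b = "brd C a (un C)"
  have b: "?b \<in> hom C a a" using braid_hom[OF a unit_Obj] a by simp
  have "?b = (\<one>\<^bsub>un C\<^esub> \<otimes> ?b) \<cdot> (?b \<otimes> \<one>\<^bsub>un C\<^esub>)"
    using braid_hexagon_left[OF a unit_Obj unit_Obj] unit_Obj by simp
  then have "?b = ?b \<cdot> ?b" using tensor_unit b by simp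
  then show ?thesis
    using invertible_idempotent_eq_id b braid_iso[OF a unit_Obj] a by simp
qed

lemma braid_unit_left: "a \<in> Obj C \<Longrightarrow> brd C (un C) a = \<one>\<^bsub>a\<^esub>"
proof -
  assume a: "a \<in> Obj C"
  let ?b = "brd C (un C) a"
  have b: "?b \<in> hom C a a" using braid_hom[OF unit_Obj a] a by simp
  have "?b = (?b \<otimes> \<one>\<^bsub>un C\<^esub>) \<cdot> (\<one>\<^bsub>un C\<^esub> \<otimes> ?b)"
    using braid_hexagon_right[OF unit_Obj unit_Obj a] unit_Obj by simp
  then have "?b = ?b \<cdot> ?b" using tensor_unit b by simp
  then show ?thesis
    using invertible_idempotent_eq_id b braid_iso[OF unit_Obj a] a by simp
qed

definition braid_inv :: "'o \<Rightarrow> 'o \<Rightarrow> 'm" where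
  "braid_inv a b = (SOME g. g \<in> hom C (b \<oplus> a) (a \<oplus> b) \<and>
     g \<cdot> brd C a b = \<one>\<^bsub>a \<oplus> b\<^esub> \<and> brd C a b \<cdot> g = \<one>\<^bsub>b \<oplus> a\<^esub>)"

lemma braid_inv:
  assumes "a \<in> Obj C" "b \<in> Obj C"
  shows "braid_inv a b \<in> hom C (b \<oplus> a) (a \<oplus> b)"
    and "braid_inv a b \<cdot> brd C a b = \<one>\<^bsub>a \<oplus> b\<^esub>" and "brd C a b \<cdot> braid_inv a b = \<one>\<^bsub>b \<oplus> a\<^esub>"
  using someI_ex[OF braid_iso[OF assms, unfolded iso_mor_def, THEN conjunct2, unfolded Bex_def]]
  unfolding braid_inv_def by auto

lemma whisker_comp:
  "p \<in> Obj C \<Longrightarrow> q \<in> Obj C \<Longrightarrow> f \<in> hom C a b \<Longrightarrow> g \<in> hom C b c \<Longrightarrow>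
   (\<one>\<^bsub>p\<^esub> \<otimes> (g \<otimes> \<one>\<^bsub>q\<^esub>)) \<cdot> (\<one>\<^bsub>p\<^esub> \<otimes> (f \<otimes> \<one>\<^bsub>q\<^esub>)) = \<one>\<^bsub>p\<^esub> \<otimes> ((g \<cdot> f) \<otimes> \<one>\<^bsub>q\<^esub>)"
proof -
  assume h: "p \<in> Obj C" "q \<in> Obj C" "f \<in> hom C a b" "g \<in> hom C b c"
  have "(g \<cdot> f) \<otimes> \<one>\<^bsub>q\<^esub> = (g \<otimes> \<one>\<^bsub>q\<^esub>) \<cdot> (f \<otimes> \<one>\<^bsub>q\<^esub>)"
    using interchange[OF h(3,4) id_hom[OF h(2)] id_hom[OF h(2)]] comp_id_left[OF id_hom[OF h(2)]] by simp
  moreover have "\<one>\<^bsub>p\<^esub> \<otimes> ((g \<otimes> \<one>\<^bsub>q\<^esub>) \<cdot> (f \<otimes> \<one>\<^bsub>q\<^esub>))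
      = (\<one>\<^bsub>p\<^esub> \<otimes> (g \<otimes> \<one>\<^bsub>q\<^esub>)) \<cdot> (\<one>\<^bsub>p\<^esub> \<otimes> (f \<otimes> \<one>\<^bsub>q\<^esub>))"
    using interchange[OF id_hom[OF h(1)] id_hom[OF h(1)] tensor_id_hom[OF h(2,3)] tensor_id_hom[OF h(2,4)]]
      comp_id_left[OF id_hom[OF h(1)]] by simp
  ultimately show ?thesis by simp
qed

lemma right_box_first_eq_parallel:
  assumes P: "P \<in> Obj C" and N: "N \<in> Obj C" and Q: "Q \<in> Obj C"
    and f: "f \<in> hom C a b" and g: "g \<in> hom C c d"
  shows "(\<one>\<^bsub>P\<^esub> \<otimes> (f \<otimes> \<one>\<^bsub>N \<oplus> d \<oplus> Q\<^esub>)) \<cdot> (\<one>\<^bsub>P \<oplus> a \<oplus> N\<^esub> \<otimes> (g \<otimes> \<one>\<^bsub>Q\<^esub>))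
       = \<one>\<^bsub>P\<^esub> \<otimes> (f \<otimes> (\<one>\<^bsub>N\<^esub> \<otimes> (g \<otimes> \<one>\<^bsub>Q\<^esub>)))"
proof -
  have a: "a \<in> Obj C" "b \<in> Obj C" using f hom_Obj by auto
  have c: "c \<in> Obj C" "d \<in> Obj C" using g hom_Obj by auto
  have gQ: "g \<otimes> \<one>\<^bsub>Q\<^esub> \<in> hom C (c \<oplus> Q) (d \<oplus> Q)" using tensor_id_hom[OF Q g] .
  have NgQ: "\<one>\<^bsub>N\<^esub> \<otimes> (g \<otimes> \<one>\<^bsub>Q\<^esub>) \<in> hom C (N \<oplus> c \<oplus> Q) (N \<oplus> d \<oplus> Q)"
    using id_tensor_hom[OF N gQ] .
  have e1: "\<one>\<^bsub>P \<oplus> a \<oplus> N\<^esub> \<otimes> (g \<otimes> \<one>\<^bsub>Q\<^esub>) = \<one>\<^bsub>P\<^esub> \<otimes> (\<one>\<^bsub>a\<^esub> \<otimes> (\<one>\<^bsub>N\<^esub> \<otimes> (g \<otimes> \<one>\<^bsub>Q\<^esub>)))"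
  proof -
    have "\<one>\<^bsub>P \<oplus> a \<oplus> N\<^esub> = \<one>\<^bsub>P\<^esub> \<otimes> (\<one>\<^bsub>a\<^esub> \<otimes> \<one>\<^bsub>N\<^esub>)"
      using tensor_id P a N tensor_Obj by simp
    then show ?thesis
      using tensor_assoc[OF id_hom[OF P] tensor_hom[OF id_hom[OF a(1)] id_hom[OF N]] gQ]
        tensor_assoc[OF id_hom[OF a(1)] id_hom[OF N] gQ] by simp
  qed
  have e2: "(f \<otimes> \<one>\<^bsub>N \<oplus> d \<oplus> Q\<^esub>) \<cdot> (\<one>\<^bsub>a\<^esub> \<otimes> (\<one>\<^bsub>N\<^esub> \<otimes> (g \<otimes> \<one>\<^bsub>Q\<^esub>))) = f \<otimes> (\<one>\<^bsub>N\<^esub> \<otimes> (g \<otimes> \<one>\<^bsub>Q\<^esub>))"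
    using interchange[OF id_hom[OF a(1)] f NgQ id_hom[OF tensor_Obj[OF N tensor_Obj[OF c(2) Q]]]]
      comp_id_left[OF NgQ] comp_id_right[OF f] by simp
  have "(\<one>\<^bsub>P\<^esub> \<otimes> (f \<otimes> \<one>\<^bsub>N \<oplus> d \<oplus> Q\<^esub>)) \<cdot> (\<one>\<^bsub>P\<^esub> \<otimes> (\<one>\<^bsub>a\<^esub> \<otimes> (\<one>\<^bsub>N\<^esub> \<otimes> (g \<otimes> \<one>\<^bsub>Q\<^esub>))))
     = \<one>\<^bsub>P\<^esub> \<otimes> ((f \<otimes> \<one>\<^bsub>N \<oplus> d \<oplus> Q\<^esub>) \<cdot> (\<one>\<^bsub>a\<^esub> \<otimes> (\<one>\<^bsub>N\<^esub> \<otimes> (g \<otimes> \<one>\<^bsub>Q\<^esub>))))"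
    using interchange[OF id_hom[OF P] id_hom[OF P] id_tensor_hom[OF a(1) NgQ]
        tensor_id_hom[OF tensor_Obj[OF N tensor_Obj[OF c(2) Q]] f]] comp_id_left[OF id_hom[OF P]] by simp
  then show ?thesis using e1 e2 by simp
qed

lemma left_box_first_eq_parallel:
  assumes P: "P \<in> Obj C" and N: "N \<in> Obj C" and Q: "Q \<in> Obj C"
    and f: "f \<in> hom C a b" and g: "g \<in> hom C c d"
  shows "(\<one>\<^bsub>P \<oplus> b \<oplus> N\<^esub> \<otimes> (g \<otimes> \<one>\<^bsub>Q\<^esub>)) \<cdot> (\<one>\<^bsub>P\<^esub> \<otimes> (f \<otimes> \<one>\<^bsub>N \<oplus> c \<oplus> Q\<^esub>))
       = \<one>\<^bsub>P\<^esub> \<otimes> (f \<otimes> (\<one>\<^bsub>N\<^esub> \<otimes> (g \<otimes> \<one>\<^bsub>Q\<^esub>)))"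
proof -
  have a: "a \<in> Obj C" "b \<in> Obj C" using f hom_Obj by auto
  have c: "c \<in> Obj C" "d \<in> Obj C" using g hom_Obj by auto
  have gQ: "g \<otimes> \<one>\<^bsub>Q\<^esub> \<in> hom C (c \<oplus> Q) (d \<oplus> Q)" using tensor_id_hom[OF Q g] .
  have NgQ: "\<one>\<^bsub>N\<^esub> \<otimes> (g \<otimes> \<one>\<^bsub>Q\<^esub>) \<in> hom C (N \<oplus> c \<oplus> Q) (N \<oplus> d \<oplus> Q)"
    using id_tensor_hom[OF N gQ] .
  have e1: "\<one>\<^bsub>P \<oplus> b \<oplus> N\<^esub> \<otimes> (g \<otimes> \<one>\<^bsub>Q\<^esub>) = \<one>\<^bsub>P\<^esub> \<otimes> (\<one>\<^bsub>b\<^esub> \<otimes> (\<one>\<^bsub>N\<^esub> \<otimes> (g \<otimes> \<one>\<^bsub>Q\<^esub>)))"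
  proof -
    have "\<one>\<^bsub>P \<oplus> b \<oplus> N\<^esub> = \<one>\<^bsub>P\<^esub> \<otimes> (\<one>\<^bsub>b\<^esub> \<otimes> \<one>\<^bsub>N\<^esub>)"
      using tensor_id P a N tensor_Obj by simp
    then show ?thesis
      using tensor_assoc[OF id_hom[OF P] tensor_hom[OF id_hom[OF a(2)] id_hom[OF N]] gQ]
        tensor_assoc[OF id_hom[OF a(2)] id_hom[OF N] gQ] by simp
  qed
  have e2: "(\<one>\<^bsub>b\<^esub> \<otimes> (\<one>\<^bsub>N\<^esub> \<otimes> (g \<otimes> \<one>\<^bsub>Q\<^esub>))) \<cdot> (f \<otimes> \<one>\<^bsub>N \<oplus> c \<oplus> Q\<^esub>) = f \<otimes> (\<one>\<^bsub>N\<^esub> \<otimes> (g \<otimes> \<one>\<^bsub>Q\<^esub>))"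
    using interchange[OF f id_hom[OF a(2)] id_hom[OF tensor_Obj[OF N tensor_Obj[OF c(1) Q]]] NgQ]
      comp_id_right[OF NgQ] comp_id_left[OF f] by simp
  have "(\<one>\<^bsub>P\<^esub> \<otimes> (\<one>\<^bsub>b\<^esub> \<otimes> (\<one>\<^bsub>N\<^esub> \<otimes> (g \<otimes> \<one>\<^bsub>Q\<^esub>)))) \<cdot> (\<one>\<^bsub>P\<^esub> \<otimes> (f \<otimes> \<one>\<^bsub>N \<oplus> c \<oplus> Q\<^esub>))
     = \<one>\<^bsub>P\<^esub> \<otimes> ((\<one>\<^bsub>b\<^esub> \<otimes> (\<one>\<^bsub>N\<^esub> \<otimes> (g \<otimes> \<one>\<^bsub>Q\<^esub>))) \<cdot> (f \<otimes> \<one>\<^bsub>N \<oplus> c \<oplus> Q\<^esub>))"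
    using interchange[OF id_hom[OF P] id_hom[OF P] tensor_id_hom[OF tensor_Obj[OF N tensor_Obj[OF c(1) Q]] f]
        id_tensor_hom[OF a(2) NgQ]] comp_id_left[OF id_hom[OF P]] by simp
  then show ?thesis using e1 e2 by simp
qed

end

section \<open>String diagrams as words of layers\<close>

text \<open>A layer (p, g, q) is the generator g with the wires p to its left and q to its right;
  words of layers are read in the order of composition.\<close>

datatype ('o, 'm) generator = Box 'm "'o list" "'o list" | Braid 'o 'o

fun gen_dom :: "('o, 'm) generator \<Rightarrow> 'o list" where
  "gen_dom (Box f d c) = d" | "gen_dom (Braid x y) = [x, y]"

fun gen_cod :: "('o, 'm) generator \<Rightarrow> 'o list" where
  "gen_cod (Box f d c) = c" | "gen_cod (Braid x y) = [y, x]"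

type_synonym ('o, 'm) layer = "'o list \<times> ('o, 'm) generator \<times> 'o list"

fun layer_dom :: "('o, 'm) layer \<Rightarrow> 'o list" where
  "layer_dom (p, g, q) = p @ gen_dom g @ q"

fun layer_cod :: "('o, 'm) layer \<Rightarrow> 'o list" where
  "layer_cod (p, g, q) = p @ gen_cod g @ q"

fun whisker :: "'o list \<Rightarrow> 'o list \<Rightarrow> ('o, 'm) layer \<Rightarrow> ('o, 'm) layer" where
  "whisker l r (p, g, q) = (l @ p, g, q @ r)"

fun word_cod :: "'o list \<Rightarrow> ('o, 'm) layer list \<Rightarrow> 'o list" where
  "word_cod a [] = a" | "word_cod a (L # W) = word_cod (layer_cod L) W"

lemma word_cod_append [simp]: "word_cod a (X @ Y) = word_cod (word_cod a X) Y"
  by (induction X arbitrary: a) auto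

lemma whisker_dom_cod:
  "layer_dom (whisker l r L) = l @ layer_dom L @ r"
  "layer_cod (whisker l r L) = l @ layer_cod L @ r"
  by (cases L; simp)+

lemma word_cod_whisker:
  "word_cod (l @ a @ r) (map (whisker l r) W) = l @ word_cod a W @ r"
  by (induction W arbitrary: a) (auto simp: whisker_dom_cod)

text \<open>Exchanging consecutive layers whose boxes lie on disjoint wires, the second one to the
  left of the first, normalises words modulo the interchange law; n bounds the number of
  passes.\<close>

fun exchangeable :: "('o, 'm) layer \<Rightarrow> ('o, 'm) layer \<Rightarrow> bool" where
  "exchangeable (p1, g1, q1) (p2, g2, q2) \<longleftrightarrow> length p2 + length (gen_dom g2) \<le> length p1"

fun exchanged_fst :: "('o, 'm) layer \<Rightarrow> ('o, 'm) layer \<Rightarrow> ('o, 'm) layer" where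
  "exchanged_fst (p1, g1, q1) (p2, g2, q2) =
     (p2, g2, drop (length p2 + length (gen_dom g2)) p1 @ gen_dom g1 @ q1)"

fun exchanged_snd :: "('o, 'm) layer \<Rightarrow> ('o, 'm) layer \<Rightarrow> ('o, 'm) layer" where
  "exchanged_snd (p1, g1, q1) (p2, g2, q2) =
     (p2 @ gen_cod g2 @ drop (length p2 + length (gen_dom g2)) p1, g1, q1)"

fun exchange_pass :: "('o, 'm) layer list \<Rightarrow> ('o, 'm) layer list" where
  "exchange_pass (L1 # L2 # W) =
     (if exchangeable L1 L2 then exchanged_fst L1 L2 # exchange_pass (exchanged_snd L1 L2 # W)
      else L1 # exchange_pass (L2 # W))"
| "exchange_pass W = W"

fun exchange_pending :: "('o, 'm) layer list \<Rightarrow> bool" where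
  "exchange_pending (L1 # L2 # W) \<longleftrightarrow> exchangeable L1 L2 \<or> exchange_pending (L2 # W)"
| "exchange_pending W \<longleftrightarrow> False"

fun exchange_normal :: "nat \<Rightarrow> ('o, 'm) layer list \<Rightarrow> ('o, 'm) layer list" where
  "exchange_normal 0 W = W"
| "exchange_normal (Suc n) W =
     (if exchange_pending W then exchange_normal n (exchange_pass W) else W)"

lemma exchange_normal_numeral [simp]:
  "exchange_normal (numeral k) W =
     (if exchange_pending W then exchange_normal (pred_numeral k) (exchange_pass W) else W)"
  by (simp add: numeral_eq_Suc)

definition rewrite_at ::
  "'o list \<Rightarrow> nat \<Rightarrow> 'o list \<Rightarrow> 'o list \<Rightarrow> 'o list \<Rightarrow> ('o, 'm) layer list \<Rightarrow>
   ('o, 'm) layer list \<Rightarrow> ('o, 'm) layer list \<Rightarrow> ('o, 'm) layer list" where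
  "rewrite_at a i l r d P Q W =
     (if word_cod a (take i W) = l @ d @ r \<and> take (length P) (drop i W) = map (whisker l r) P
      then take i W @ map (whisker l r) Q @ drop (i + length P) W else W)"

fun braid_right :: "'o \<Rightarrow> 'o list \<Rightarrow> ('o, 'm) layer list" where
  "braid_right x [] = []"
| "braid_right x (y # ys) = ([], Braid x y, ys) # map (whisker [y] []) (braid_right x ys)"

fun braid_left :: "'o list \<Rightarrow> 'o \<Rightarrow> ('o, 'm) layer list" where
  "braid_left [] x = []"
| "braid_left (y # ys) x = map (whisker [y] []) (braid_left ys x) @ [([], Braid y x, ys)]"

context strict_braided
begin

fun tensor_objs :: "'o list \<Rightarrow> 'o" where
  "tensor_objs [] = un C" | "tensor_objs (x # xs) = x \<oplus> tensor_objs xs"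

fun gen_typed :: "('o, 'm) generator \<Rightarrow> bool" where
  "gen_typed (Box f d c) \<longleftrightarrow>
     set d \<subseteq> Obj C \<and> set c \<subseteq> Obj C \<and> f \<in> hom C (tensor_objs d) (tensor_objs c)"
| "gen_typed (Braid x y) \<longleftrightarrow> x \<in> Obj C \<and> y \<in> Obj C"

fun gen_eval :: "('o, 'm) generator \<Rightarrow> 'm" where
  "gen_eval (Box f d c) = f" | "gen_eval (Braid x y) = brd C x y"

fun layer_typed :: "('o, 'm) layer \<Rightarrow> bool" where
  "layer_typed (p, g, q) \<longleftrightarrow> set p \<subseteq> Obj C \<and> gen_typed g \<and> set q \<subseteq> Obj C"

fun layer_eval :: "('o, 'm) layer \<Rightarrow> 'm" where
  "layer_eval (p, g, q) = \<one>\<^bsub>tensor_objs p\<^esub> \<otimes> (gen_eval g \<otimes> \<one>\<^bsub>tensor_objs q\<^esub>)"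

fun well_typed :: "'o list \<Rightarrow> ('o, 'm) layer list \<Rightarrow> bool" where
  "well_typed a [] \<longleftrightarrow> set a \<subseteq> Obj C"
| "well_typed a (L # W) \<longleftrightarrow> layer_dom L = a \<and> layer_typed L \<and> well_typed (layer_cod L) W"

fun word_eval :: "'o list \<Rightarrow> ('o, 'm) layer list \<Rightarrow> 'm" where
  "word_eval a [] = \<one>\<^bsub>tensor_objs a\<^esub>"
| "word_eval a (L # W) = word_eval (layer_cod L) W \<cdot> layer_eval L"

definition word_eq :: "'o list \<Rightarrow> ('o, 'm) layer list \<Rightarrow> ('o, 'm) layer list \<Rightarrow> bool" where
  "word_eq d P Q \<longleftrightarrow> well_typed d P \<and> well_typed d Q \<and> word_cod d P = word_cod d Q \<and>
     word_eval d P = word_eval d Q"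

lemma word_eq_sym: "word_eq d P Q \<Longrightarrow> word_eq d Q P"
  unfolding word_eq_def by auto

lemma tensor_objs_Obj: "set xs \<subseteq> Obj C \<Longrightarrow> tensor_objs xs \<in> Obj C"
  by (induction xs) (auto simp: unit_Obj tensor_Obj)

lemma tensor_objs_append:
  "set xs \<subseteq> Obj C \<Longrightarrow> set ys \<subseteq> Obj C \<Longrightarrow> tensor_objs (xs @ ys) = tensor_objs xs \<oplus> tensor_objs ys"
  by (induction xs) (auto simp: tensor_objs_Obj tensor_obj_assoc)

lemma id_tensor_objs_append:
  "set xs \<subseteq> Obj C \<Longrightarrow> set ys \<subseteq> Obj C \<Longrightarrow>
   \<one>\<^bsub>tensor_objs (xs @ ys)\<^esub> = \<one>\<^bsub>tensor_objs xs\<^esub> \<otimes> \<one>\<^bsub>tensor_objs ys\<^esub>"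
  by (simp add: tensor_objs_append tensor_id tensor_objs_Obj)

lemma gen_eval_hom:
  "gen_typed g \<Longrightarrow> gen_eval g \<in> hom C (tensor_objs (gen_dom g)) (tensor_objs (gen_cod g))"
  by (cases g) (auto simp: braid_hom)

lemma gen_typed_Obj: "gen_typed g \<Longrightarrow> set (gen_dom g) \<subseteq> Obj C \<and> set (gen_cod g) \<subseteq> Obj C"
  by (cases g) auto

lemma layer_typed_Obj:
  "layer_typed L \<Longrightarrow> set (layer_dom L) \<subseteq> Obj C \<and> set (layer_cod L) \<subseteq> Obj C"
  by (cases L) (auto dest: gen_typed_Obj)

lemma layer_eval_hom:
  assumes "layer_typed L"
  shows "layer_eval L \<in> hom C (tensor_objs (layer_dom L)) (tensor_objs (layer_cod L))"
proof (cases L)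
  case (fields p g q)
  with assms have obj: "set p \<subseteq> Obj C" "set q \<subseteq> Obj C" and g: "gen_typed g" by auto
  then show ?thesis
    using fields gen_typed_Obj[OF g] tensor_hom[OF id_hom tensor_hom[OF gen_eval_hom[OF g] id_hom]]
    by (simp add: tensor_objs_append tensor_objs_Obj)
qed

lemma well_typed_dom_Obj: "well_typed a W \<Longrightarrow> set a \<subseteq> Obj C"
  by (cases W) (auto dest: layer_typed_Obj)

lemma well_typed_append [simp]:
  "well_typed a (X @ Y) \<longleftrightarrow> well_typed a X \<and> well_typed (word_cod a X) Y"
  by (induction X arbitrary: a) (auto dest: well_typed_dom_Obj)

lemma word_eval_hom:
  "well_typed a W \<Longrightarrow> word_eval a W \<in> hom C (tensor_objs a) (tensor_objs (word_cod a W))"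
proof (induction W arbitrary: a)
  case Nil then show ?case by (simp add: id_hom tensor_objs_Obj)
next
  case (Cons L W) then show ?case using layer_eval_hom[of L] by (auto intro: comp_hom)
qed

lemma word_eval_append:
  "well_typed a X \<Longrightarrow> well_typed (word_cod a X) Y \<Longrightarrow>
   word_eval a (X @ Y) = word_eval (word_cod a X) Y \<cdot> word_eval a X"
proof (induction X arbitrary: a)
  case Nil then show ?case using word_eval_hom[of a Y] comp_id_right by simp
next
  case (Cons L X)
  then have X: "well_typed (layer_cod L) X" "well_typed (word_cod (layer_cod L) X) Y" "layer_typed L"
    by auto
  then show ?case
    using Cons.IH[OF X(1,2)] comp_assoc[OF layer_eval_hom word_eval_hom[OF X(1)] word_eval_hom[OF X(2)]]
    by simp
qed

lemma well_typed_whisker: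
  "well_typed a W \<Longrightarrow> set l \<subseteq> Obj C \<Longrightarrow> set r \<subseteq> Obj C \<Longrightarrow> well_typed (l @ a @ r) (map (whisker l r) W)"
proof (induction W arbitrary: a)
  case (Cons L W)
  then show ?case using Cons.IH[of "layer_cod L"] by (cases L) (auto simp: whisker_dom_cod)
qed simp

lemma layer_eval_whisker:
  assumes "layer_typed L" "set l \<subseteq> Obj C" "set r \<subseteq> Obj C"
  shows "layer_eval (whisker l r L) = \<one>\<^bsub>tensor_objs l\<^esub> \<otimes> (layer_eval L \<otimes> \<one>\<^bsub>tensor_objs r\<^esub>)"
proof (cases L)
  case (fields p g q)
  with assms have obj: "set p \<subseteq> Obj C" "set q \<subseteq> Obj C" and g: "gen_typed g" by auto
  have i: "\<And>x. set x \<subseteq> Obj C \<Longrightarrow> \<one>\<^bsub>tensor_objs x\<^esub> \<in> hom C (tensor_objs x) (tensor_objs x)"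
    by (simp add: id_hom tensor_objs_Obj)
  note g = gen_eval_hom[OF g]
  note ip = i[OF obj(1)] and iq = i[OF obj(2)] and il = i[OF assms(2)] and ir = i[OF assms(3)]
  have "layer_eval (whisker l r L) =
      (\<one>\<^bsub>tensor_objs l\<^esub> \<otimes> \<one>\<^bsub>tensor_objs p\<^esub>) \<otimes> (gen_eval g \<otimes> (\<one>\<^bsub>tensor_objs q\<^esub> \<otimes> \<one>\<^bsub>tensor_objs r\<^esub>))"
    using fields obj assms by (simp add: id_tensor_objs_append)
  also have "\<dots> = \<one>\<^bsub>tensor_objs l\<^esub> \<otimes> (\<one>\<^bsub>tensor_objs p\<^esub> \<otimes> (gen_eval g \<otimes> (\<one>\<^bsub>tensor_objs q\<^esub> \<otimes> \<one>\<^bsub>tensor_objs r\<^esub>)))"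
    by (rule tensor_assoc[OF il ip tensor_hom[OF g tensor_hom[OF iq ir]]])
  also have "\<dots> = \<one>\<^bsub>tensor_objs l\<^esub> \<otimes> ((\<one>\<^bsub>tensor_objs p\<^esub> \<otimes> (gen_eval g \<otimes> \<one>\<^bsub>tensor_objs q\<^esub>)) \<otimes> \<one>\<^bsub>tensor_objs r\<^esub>)"
    using tensor_assoc[OF g iq ir] tensor_assoc[OF ip tensor_hom[OF g iq] ir] by simp
  finally show ?thesis using fields by simp
qed

lemma word_eval_whisker:
  "well_typed a W \<Longrightarrow> set l \<subseteq> Obj C \<Longrightarrow> set r \<subseteq> Obj C \<Longrightarrow>
   word_eval (l @ a @ r) (map (whisker l r) W) = \<one>\<^bsub>tensor_objs l\<^esub> \<otimes> (word_eval a W \<otimes> \<one>\<^bsub>tensor_objs r\<^esub>)"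
proof (induction W arbitrary: a)
  case Nil then show ?case by (simp add: id_tensor_objs_append)
next
  case (Cons L W)
  then have W: "well_typed (layer_cod L) W" and L: "layer_typed L" and a: "layer_dom L = a" by auto
  have "word_eval (l @ a @ r) (map (whisker l r) (L # W)) =
      word_eval (l @ layer_cod L @ r) (map (whisker l r) W) \<cdot> layer_eval (whisker l r L)"
    by (simp add: whisker_dom_cod)
  also have "\<dots> = (\<one>\<^bsub>tensor_objs l\<^esub> \<otimes> (word_eval (layer_cod L) W \<otimes> \<one>\<^bsub>tensor_objs r\<^esub>)) \<cdot>
      (\<one>\<^bsub>tensor_objs l\<^esub> \<otimes> (layer_eval L \<otimes> \<one>\<^bsub>tensor_objs r\<^esub>))"
    using Cons.IH[OF W Cons.prems(2,3)] layer_eval_whisker[OF L Cons.prems(2,3)] by simp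
  also have "\<dots> = \<one>\<^bsub>tensor_objs l\<^esub> \<otimes> ((word_eval (layer_cod L) W \<cdot> layer_eval L) \<otimes> \<one>\<^bsub>tensor_objs r\<^esub>)"
    using whisker_comp[OF tensor_objs_Obj tensor_objs_Obj layer_eval_hom[OF L] word_eval_hom[OF W]]
      Cons.prems(2,3) by simp
  finally show ?case by simp
qed

lemma word_eq_whisker:
  "word_eq d P Q \<Longrightarrow> set l \<subseteq> Obj C \<Longrightarrow> set r \<subseteq> Obj C \<Longrightarrow>
   word_eq (l @ d @ r) (map (whisker l r) P) (map (whisker l r) Q)"
  unfolding word_eq_def by (simp add: well_typed_whisker word_cod_whisker word_eval_whisker)

lemma word_eq_append:
  "word_eq a X X' \<Longrightarrow> word_eq (word_cod a X) Y Y' \<Longrightarrow> word_eq a (X @ Y) (X' @ Y')"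
  unfolding word_eq_def by (simp add: word_eval_append)

lemma word_eq_trans: "word_eq d P Q \<Longrightarrow> word_eq d Q R \<Longrightarrow> word_eq d P R"
  unfolding word_eq_def by simp

lemma word_eq_refl: "well_typed d P \<Longrightarrow> word_eq d P P"
  unfolding word_eq_def by simp

lemma word_eq_context:
  assumes "word_eq (word_cod a X) P Q" "well_typed a (X @ P @ Y)"
  shows "well_typed a (X @ Q @ Y) \<and> word_eval a (X @ Q @ Y) = word_eval a (X @ P @ Y)"
  using assms unfolding word_eq_def by (simp add: word_eval_append)

lemma rewrite_at_eval:
  assumes PQ: "word_eq d P Q" and W: "well_typed a W"
  shows "well_typed a (rewrite_at a i l r d P Q W) \<and> word_eval a (rewrite_at a i l r d P Q W) = word_eval a W"
proof (cases "word_cod a (take i W) = l @ d @ r \<and> take (length P) (drop i W) = map (whisker l r) P")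
  case True
  let ?X = "take i W" and ?Y = "drop (i + length P) W"
  have split: "W = ?X @ map (whisker l r) P @ ?Y"
    using True by (metis append_take_drop_id drop_drop add.commute)
  have "set (l @ d @ r) \<subseteq> Obj C"
    using W split True well_typed_dom_Obj by (metis well_typed_append)
  then have "word_eq (word_cod a ?X) (map (whisker l r) P) (map (whisker l r) Q)"
    using True word_eq_whisker[OF PQ] by simp
  moreover have "rewrite_at a i l r d P Q W = ?X @ map (whisker l r) Q @ ?Y"
    using True by (simp add: rewrite_at_def)
  ultimately show ?thesis
    using word_eq_context[of a ?X _ _ ?Y] W split by metis
next
  case False
  then have "rewrite_at a i l r d P Q W = W" unfolding rewrite_at_def by (rule if_not_P)
  then show ?thesis using W by simp
qed

lemma exchangeable_shape:
  assumes "layer_cod L1 = layer_dom L2" "exchangeable L1 L2"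
  obtains p g1 g2 m q where "L1 = (p @ gen_dom g2 @ m, g1, q)" "L2 = (p, g2, m @ gen_cod g1 @ q)"
    "exchanged_fst L1 L2 = (p, g2, m @ gen_dom g1 @ q)"
    "exchanged_snd L1 L2 = (p @ gen_cod g2 @ m, g1, q)"
proof -
  obtain p1 g1 q1 p2 g2 q2 where L: "L1 = (p1, g1, q1)" "L2 = (p2, g2, q2)" by (cases L1, cases L2)
  let ?k = "length p2 + length (gen_dom g2)"
  have e: "p1 @ gen_cod g1 @ q1 = p2 @ gen_dom g2 @ q2" and k: "?k \<le> length p1"
    using assms L by auto
  have "take ?k p1 = p2 @ gen_dom g2"
    using arg_cong[OF e, of "take ?k"] k by simp
  then have p1: "p1 = p2 @ gen_dom g2 @ drop ?k p1" by (metis append.assoc append_take_drop_id)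
  have q2: "q2 = drop ?k p1 @ gen_cod g1 @ q1"
    using arg_cong[OF e, of "drop ?k"] k by simp
  show ?thesis by (rule that[of p2 g2 "drop ?k p1" g1 q1]) (use L p1 q2 in auto)
qed

lemma exchange_eval:
  assumes W: "well_typed a [L1, L2]" and ex: "exchangeable L1 L2"
  shows "well_typed a [exchanged_fst L1 L2, exchanged_snd L1 L2] \<and>
    word_cod a [exchanged_fst L1 L2, exchanged_snd L1 L2] = word_cod a [L1, L2] \<and>
    word_eval a [exchanged_fst L1 L2, exchanged_snd L1 L2] = word_eval a [L1, L2]"
proof -
  from W have "layer_cod L1 = layer_dom L2" by simp
  then obtain p g1 g2 m q where L: "L1 = (p @ gen_dom g2 @ m, g1, q)" "L2 = (p, g2, m @ gen_cod g1 @ q)"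
    and X: "exchanged_fst L1 L2 = (p, g2, m @ gen_dom g1 @ q)"
    "exchanged_snd L1 L2 = (p @ gen_cod g2 @ m, g1, q)"
    using ex by (rule exchangeable_shape)
  from W L have g: "gen_typed g1" "gen_typed g2" and obj: "set p \<subseteq> Obj C" "set m \<subseteq> Obj C" "set q \<subseteq> Obj C"
    by auto
  note dc = gen_typed_Obj[OF g(1)] gen_typed_Obj[OF g(2)]
  note T = tensor_objs_Obj[OF obj(1)] tensor_objs_Obj[OF obj(2)] tensor_objs_Obj[OF obj(3)]
  have "word_eval a [L1, L2] = layer_eval L2 \<cdot> layer_eval L1"
    using W comp_id_left[OF layer_eval_hom[of L2]] by simp
  also have "\<dots> = \<one>\<^bsub>tensor_objs p\<^esub> \<otimes> (gen_eval g2 \<otimes> (\<one>\<^bsub>tensor_objs m\<^esub> \<otimes> (gen_eval g1 \<otimes> \<one>\<^bsub>tensor_objs q\<^esub>)))"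
    using right_box_first_eq_parallel[OF T gen_eval_hom[OF g(2)] gen_eval_hom[OF g(1)]] L obj dc
    by (simp add: tensor_objs_append)
  also have "\<dots> = layer_eval (exchanged_snd L1 L2) \<cdot> layer_eval (exchanged_fst L1 L2)"
    using left_box_first_eq_parallel[OF T gen_eval_hom[OF g(2)] gen_eval_hom[OF g(1)]] X obj dc
    by (simp add: tensor_objs_append)
  also have "\<dots> = word_eval a [exchanged_fst L1 L2, exchanged_snd L1 L2]"
    using X g obj dc comp_id_left[OF layer_eval_hom[of "exchanged_snd L1 L2"]] by simp
  finally show ?thesis using W L X g obj dc by auto
qed

lemma exchange_pass_eval:
  "well_typed a W \<Longrightarrow> well_typed a (exchange_pass W) \<and>
     word_cod a (exchange_pass W) = word_cod a W \<and> word_eval a (exchange_pass W) = word_eval a W"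
proof (induction W arbitrary: a rule: exchange_pass.induct)
  case (1 L1 L2 W)
  show ?case
  proof (cases "exchangeable L1 L2")
    case True
    let ?L1 = "exchanged_fst L1 L2" and ?L2 = "exchanged_snd L1 L2"
    have W12: "well_typed a [L1, L2]" and W: "well_typed (word_cod a [L1, L2]) W"
      using "1.prems" well_typed_append[of a "[L1, L2]" W] by simp_all
    note ex = exchange_eval[OF W12 True]
    have cod: "layer_cod ?L2 = layer_cod L2" using ex by simp
    have "well_typed (layer_cod ?L1) (?L2 # W)" using ex cod "1.prems" by simp
    note IH = "1.IH"(1)[OF True this]
    have "word_eval a (exchange_pass (L1 # L2 # W)) = word_eval (layer_cod ?L1) (?L2 # W) \<cdot> layer_eval ?L1"
      using True IH by simp
    also have "\<dots> = word_eval a ([?L1, ?L2] @ W)" by simp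
    also have "\<dots> = word_eval a ([L1, L2] @ W)"
      using ex W W12 by (simp only: word_eval_append)
    finally show ?thesis using True IH ex "1.prems" cod by auto
  next
    case False
    have "well_typed (layer_cod L1) (L2 # W)" using "1.prems" by simp
    with "1.IH"(2)[OF False this] False "1.prems" show ?thesis by simp
  qed
qed auto

lemma exchange_normal_eval:
  "well_typed a W \<Longrightarrow> well_typed a (exchange_normal n W) \<and> word_eval a (exchange_normal n W) = word_eval a W"
proof (induction n arbitrary: W)
  case (Suc n) then show ?case using exchange_pass_eval[of a W] by auto
qed simp

text \<open>A calculation step rearranges a word by the interchange law and possibly rewrites a
  subword of the result.  The fuel 100 suffices for all words below.\<close>

lemma interchange_eval:
  "well_typed a X \<Longrightarrow> well_typed a Y \<Longrightarrow> exchange_normal 100 X = exchange_normal 100 Y \<Longrightarrow>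
   word_eval a X = word_eval a Y"
  using exchange_normal_eval by metis

lemma rewrite_eval:
  "word_eq d P Q \<Longrightarrow> well_typed a X \<Longrightarrow> rewrite_at a i l r d P Q X = Z \<Longrightarrow>
   word_eval a X = word_eval a Z"
  using rewrite_at_eval by metis

lemma interchange_rewrite_eval:
  "word_eq d P Q \<Longrightarrow> well_typed a X \<Longrightarrow> well_typed a Y \<Longrightarrow>
   exchange_normal 100 X = exchange_normal 100 Y \<Longrightarrow> rewrite_at a i l r d P Q Y = Z \<Longrightarrow>
   word_eval a X = word_eval a Z"
  using interchange_eval rewrite_at_eval by metis

lemma braid_right_eval:
  "set (x # ys) \<subseteq> Obj C \<Longrightarrow> well_typed (x # ys) (braid_right x ys) \<and>
   word_cod (x # ys) (braid_right x ys :: ('o, 'm) layer list) = ys @ [x] \<and>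
   word_eval (x # ys) (braid_right x ys) = brd C x (tensor_objs ys)"
proof (induction ys)
  case Nil then show ?case by (simp add: braid_unit_right)
next
  case (Cons y ys)
  then have obj: "x \<in> Obj C" "y \<in> Obj C" "set ys \<subseteq> Obj C" by auto
  note T = tensor_objs_Obj[OF obj(3)]
  from Cons obj have W: "well_typed (x # ys) (braid_right x ys)"
    and c: "word_cod (x # ys) (braid_right x ys :: ('o, 'm) layer list) = ys @ [x]"
    and e: "word_eval (x # ys) (braid_right x ys) = brd C x (tensor_objs ys)" by auto
  have W': "well_typed (y # x # ys) (map (whisker [y] []) (braid_right x ys))"
    using well_typed_whisker[OF W, of "[y]" "[]"] obj by simp
  have c': "word_cod (y # x # ys) (map (whisker [y] []) (braid_right x ys :: ('o, 'm) layer list)) =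
      y # ys @ [x]"
    using c by (simp add: word_cod_whisker[of "[y]" "x # ys" "[]", simplified])
  have e': "word_eval (y # x # ys) (map (whisker [y] []) (braid_right x ys)) =
      \<one>\<^bsub>y\<^esub> \<otimes> brd C x (tensor_objs ys)"
    using word_eval_whisker[OF W, of "[y]" "[]"] e obj tensor_unit(2)[OF braid_hom[OF obj(1) T]] by simp
  have "word_eval (x # y # ys) (braid_right x (y # ys)) =
      (\<one>\<^bsub>y\<^esub> \<otimes> brd C x (tensor_objs ys)) \<cdot> (brd C x y \<otimes> \<one>\<^bsub>tensor_objs ys\<^esub>)"
    using word_eval_append[of "x # y # ys" "[([], Braid x y, ys)]"] W' e' obj T
      tensor_unit(1)[OF tensor_id_hom[OF T braid_hom[OF obj(1,2)]]] by simp
  also have "\<dots> = brd C x (tensor_objs (y # ys))" using braid_hexagon_left[OF obj(1,2) T] by simp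
  finally show ?case using W' c' obj by simp
qed

lemma braid_left_eval:
  "set (x # ys) \<subseteq> Obj C \<Longrightarrow> well_typed (ys @ [x]) (braid_left ys x) \<and>
   word_cod (ys @ [x]) (braid_left ys x :: ('o, 'm) layer list) = x # ys \<and>
   word_eval (ys @ [x]) (braid_left ys x) = brd C (tensor_objs ys) x"
proof (induction ys)
  case Nil then show ?case by (simp add: braid_unit_left)
next
  case (Cons y ys)
  then have obj: "x \<in> Obj C" "y \<in> Obj C" "set ys \<subseteq> Obj C" by auto
  note T = tensor_objs_Obj[OF obj(3)]
  from Cons obj have W: "well_typed (ys @ [x]) (braid_left ys x)"
    and c: "word_cod (ys @ [x]) (braid_left ys x :: ('o, 'm) layer list) = x # ys"
    and e: "word_eval (ys @ [x]) (braid_left ys x) = brd C (tensor_objs ys) x" by auto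
  have W': "well_typed (y # ys @ [x]) (map (whisker [y] []) (braid_left ys x))"
    using well_typed_whisker[OF W, of "[y]" "[]"] obj by simp
  have c': "word_cod (y # ys @ [x]) (map (whisker [y] []) (braid_left ys x :: ('o, 'm) layer list)) =
      y # x # ys"
    using c by (simp add: word_cod_whisker[of "[y]" "ys @ [x]" "[]", simplified])
  have e': "word_eval (y # ys @ [x]) (map (whisker [y] []) (braid_left ys x)) =
      \<one>\<^bsub>y\<^esub> \<otimes> brd C (tensor_objs ys) x"
    using word_eval_whisker[OF W, of "[y]" "[]"] e obj tensor_unit(2)[OF braid_hom[OF T obj(1)]] by simp
  have "word_eval ((y # ys) @ [x]) (braid_left (y # ys) x) =
      (brd C y x \<otimes> \<one>\<^bsub>tensor_objs ys\<^esub>) \<cdot> (\<one>\<^bsub>y\<^esub> \<otimes> brd C (tensor_objs ys) x)"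
    using word_eval_append[of "y # ys @ [x]" _ "[([], Braid y x, ys)]"] W' c' e' obj T
      tensor_unit(1)[OF tensor_id_hom[OF T braid_hom[OF obj(2,1)]]]
      comp_id_left[OF tensor_id_hom[OF T braid_hom[OF obj(2,1)]]] by (simp add: tensor_obj_assoc)
  also have "\<dots> = brd C (tensor_objs (y # ys)) x" using braid_hexagon_right[OF obj(2) T obj(1)] by simp
  finally show ?case using W' c' obj by simp
qed

lemma well_typed_cod_Obj: "well_typed a W \<Longrightarrow> set (word_cod a W) \<subseteq> Obj C"
  by (induction W arbitrary: a) auto

lemma braid_right_natural:
  assumes P: "well_typed d P" and x: "x \<in> Obj C"
  shows "word_eq (x # d) (braid_right x d @ map (whisker [] [x]) P)
           (map (whisker [x] []) P @ braid_right x (word_cod d P))"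
proof -
  have obj: "set d \<subseteq> Obj C" "set (word_cod d P) \<subseteq> Obj C"
    using well_typed_dom_Obj[OF P] well_typed_cod_Obj[OF P] by auto
  note b1 = braid_right_eval[of x d] and b2 = braid_right_eval[of x "word_cod d P"]
  note w1 = well_typed_whisker[OF P, of "[]" "[x]"] and w2 = well_typed_whisker[OF P, of "[x]" "[]"]
  note e1 = word_eval_whisker[OF P, of "[]" "[x]"] and e2 = word_eval_whisker[OF P, of "[x]" "[]"]
  note c1 = word_cod_whisker[of "[]" d "[x]" P] and c2 = word_cod_whisker[of "[x]" d "[]" P]
  note h = word_eval_hom[OF P]
  have "word_eval (x # d) (braid_right x d @ map (whisker [] [x]) P) =
      (word_eval d P \<otimes> \<one>\<^bsub>x\<^esub>) \<cdot> brd C x (tensor_objs d)"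
    using word_eval_append[of "x # d" "braid_right x d" "map (whisker [] [x]) P"] b1 w1 e1 obj x
      tensor_unit(1)[OF tensor_id_hom[OF x h]] by simp
  also have "\<dots> = brd C x (tensor_objs (word_cod d P)) \<cdot> (\<one>\<^bsub>x\<^esub> \<otimes> word_eval d P)"
    by (rule braid_natural[OF id_hom[OF x] h])
  also have "\<dots> = word_eval (x # d) (map (whisker [x] []) P @ braid_right x (word_cod d P))"
    using word_eval_append[of "x # d" "map (whisker [x] []) P" "braid_right x (word_cod d P)"]
      b2 w2 e2 c2 obj x tensor_unit(2)[OF h] by simp
  finally show ?thesis unfolding word_eq_def using b1 b2 w1 w2 c1 c2 obj x by simp
qed

lemma braid_left_natural:
  assumes P: "well_typed d P" and x: "x \<in> Obj C"
  shows "word_eq (d @ [x]) (braid_left d x @ map (whisker [x] []) P)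
           (map (whisker [] [x]) P @ braid_left (word_cod d P) x)"
proof -
  have obj: "set d \<subseteq> Obj C" "set (word_cod d P) \<subseteq> Obj C"
    using well_typed_dom_Obj[OF P] well_typed_cod_Obj[OF P] by auto
  note b1 = braid_left_eval[of x d] and b2 = braid_left_eval[of x "word_cod d P"]
  note w1 = well_typed_whisker[OF P, of "[]" "[x]"] and w2 = well_typed_whisker[OF P, of "[x]" "[]"]
  note e1 = word_eval_whisker[OF P, of "[]" "[x]"] and e2 = word_eval_whisker[OF P, of "[x]" "[]"]
  note c1 = word_cod_whisker[of "[]" d "[x]" P] and c2 = word_cod_whisker[of "[x]" d "[]" P]
  note h = word_eval_hom[OF P]
  have "word_eval (d @ [x]) (braid_left d x @ map (whisker [x] []) P) =
      (\<one>\<^bsub>x\<^esub> \<otimes> word_eval d P) \<cdot> brd C (tensor_objs d) x"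
    using word_eval_append[of "d @ [x]" "braid_left d x" "map (whisker [x] []) P"] b1 w2 e2 obj x
      tensor_unit(2)[OF h] by simp
  also have "\<dots> = brd C (tensor_objs (word_cod d P)) x \<cdot> (word_eval d P \<otimes> \<one>\<^bsub>x\<^esub>)"
    by (rule braid_natural[OF h id_hom[OF x]])
  also have "\<dots> = word_eval (d @ [x]) (map (whisker [] [x]) P @ braid_left (word_cod d P) x)"
    using word_eval_append[of "d @ [x]" "map (whisker [] [x]) P" "braid_left (word_cod d P) x"]
      b2 w1 e1 c1 obj x tensor_unit(1)[OF tensor_id_hom[OF x h]] by simp
  finally show ?thesis unfolding word_eq_def using b1 b2 w1 w2 c1 c2 obj x by simp
qed

text \<open>Simplification rules for evaluating concrete words; they drop the identities on the
  unit object contributed by empty lists of wires.\<close>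

lemma word_eval_Cons_Cons:
  "word_eval a (L1 # L2 # W) = word_eval (layer_cod L1) (L2 # W) \<cdot> layer_eval L1"
  by simp

lemma word_eval_single: "layer_typed L \<Longrightarrow> word_eval a [L] = layer_eval L"
  using comp_id_left[OF layer_eval_hom] by simp

lemma layer_eval_Nil_Nil: "gen_typed g \<Longrightarrow> layer_eval ([], g, []) = gen_eval g"
  using tensor_unit[OF gen_eval_hom] by simp

lemma layer_eval_Nil_Cons:
  "gen_typed g \<Longrightarrow> set (x # q) \<subseteq> Obj C \<Longrightarrow>
   layer_eval ([], g, x # q) = gen_eval g \<otimes> \<one>\<^bsub>tensor_objs (x # q)\<^esub>"
  using tensor_unit(1)[OF tensor_id_hom[OF tensor_objs_Obj gen_eval_hom]]
  by (simp del: tensor_objs.simps(2))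

lemma layer_eval_Cons_Nil:
  "gen_typed g \<Longrightarrow> layer_eval (x # p, g, []) = \<one>\<^bsub>tensor_objs (x # p)\<^esub> \<otimes> gen_eval g"
  using tensor_unit(2)[OF gen_eval_hom] by (simp del: tensor_objs.simps(2))

lemma layer_eval_Cons_Cons:
  "layer_eval (x # p, g, y # q) = \<one>\<^bsub>tensor_objs (x # p)\<^esub> \<otimes> (gen_eval g \<otimes> \<one>\<^bsub>tensor_objs (y # q)\<^esub>)"
  by (simp del: tensor_objs.simps(2))

declare word_eval.simps(2) [simp del] layer_eval.simps [simp del]
declare word_eval_Cons_Cons [simp] word_eval_single [simp] layer_eval_Nil_Nil [simp]
  layer_eval_Nil_Cons [simp] layer_eval_Cons_Nil [simp] layer_eval_Cons_Cons [simp]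

end

section \<open>Braided Hopf algebras\<close>

locale braided_hopf = strict_braided C for C :: "('o, 'm) bmc" +
  fixes A :: 'o and mu eta delta eps S :: 'm
  assumes hopf: "is_hopf_algebra C A mu eta delta eps S"
begin

abbreviation "Mul \<equiv> Box mu [A, A] [A]"
abbreviation "Unit \<equiv> Box eta [] [A]"
abbreviation "Comul \<equiv> Box delta [A] [A, A]"
abbreviation "Counit \<equiv> Box eps [A] []"
abbreviation "Ant \<equiv> Box S [A] [A]"

lemma A_Obj [simp]: "A \<in> Obj C"
  and mu_hom [simp]: "mu \<in> hom C (A \<oplus> A) A" and eta_hom [simp]: "eta \<in> hom C (un C) A"
  and delta_hom [simp]: "delta \<in> hom C A (A \<oplus> A)" and eps_hom [simp]: "eps \<in> hom C A (un C)"
  and S_hom [simp]: "S \<in> hom C A A"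
  using hopf unfolding is_hopf_algebra_def is_algebra_def by auto

lemma mul_assoc_word:
  "word_eq [A, A, A] [([], Mul, [A]), ([], Mul, [])] [([A], Mul, []), ([], Mul, [])]"
  using hopf unfolding is_hopf_algebra_def is_algebra_def word_eq_def by simp

lemma mul_unit_left_word: "word_eq [A] [([], Unit, [A]), ([], Mul, [])] []"
  using hopf unfolding is_hopf_algebra_def is_algebra_def word_eq_def by simp

lemma mul_unit_right_word: "word_eq [A] [([A], Unit, []), ([], Mul, [])] []"
  using hopf unfolding is_hopf_algebra_def is_algebra_def word_eq_def by simp

lemma comul_coassoc_word:
  "word_eq [A] [([], Comul, []), ([], Comul, [A])] [([], Comul, []), ([A], Comul, [])]"
  using hopf unfolding is_hopf_algebra_def word_eq_def by simp

lemma counit_left_word: "word_eq [A] [([], Comul, []), ([], Counit, [A])] []"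
  using hopf unfolding is_hopf_algebra_def word_eq_def by simp

lemma counit_right_word: "word_eq [A] [([], Comul, []), ([A], Counit, [])] []"
  using hopf unfolding is_hopf_algebra_def word_eq_def by simp

lemma antipode_left_word:
  "word_eq [A] [([], Comul, []), ([], Ant, [A]), ([], Mul, [])] [([], Counit, []), ([], Unit, [])]"
  using hopf comp_assoc[OF delta_hom tensor_id_hom[OF A_Obj S_hom] mu_hom]
  unfolding is_hopf_algebra_def word_eq_def by simp

lemma antipode_right_word:
  "word_eq [A] [([], Comul, []), ([A], Ant, []), ([], Mul, [])] [([], Counit, []), ([], Unit, [])]"
  using hopf comp_assoc[OF delta_hom id_tensor_hom[OF A_Obj S_hom] mu_hom]
  unfolding is_hopf_algebra_def word_eq_def by simp

lemma counit_mul_word: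
  "word_eq [A, A] [([], Mul, []), ([], Counit, [])] [([], Counit, [A]), ([], Counit, [])]"
proof -
  have "eps \<otimes> eps = (\<one>\<^bsub>un C\<^esub> \<cdot> eps) \<otimes> (eps \<cdot> \<one>\<^bsub>A\<^esub>)"
    using comp_id_left[OF eps_hom] comp_id_right[OF eps_hom] by simp
  also have "\<dots> = (\<one>\<^bsub>un C\<^esub> \<otimes> eps) \<cdot> (eps \<otimes> \<one>\<^bsub>A\<^esub>)"
    by (rule interchange[OF eps_hom id_hom id_hom eps_hom]) (simp_all add: unit_Obj)
  also have "\<dots> = eps \<cdot> (eps \<otimes> \<one>\<^bsub>A\<^esub>)" using tensor_unit(1)[OF eps_hom] by simp
  finally show ?thesis using hopf unfolding is_hopf_algebra_def word_eq_def by simp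
qed

lemma bialgebra_word:
  "word_eq [A, A] [([], Mul, []), ([], Comul, [])]
     [([], Comul, [A]), ([A, A], Comul, []), ([A], Braid A A, [A]), ([], Mul, [A, A]),
      ([A], Mul, [])]"
proof -
  have A2: "A \<oplus> A \<in> Obj C" by (simp add: tensor_Obj)
  have M1: "mu \<otimes> \<one>\<^bsub>A \<oplus> A\<^esub> \<in> hom C (A \<oplus> A \<oplus> A \<oplus> A) (A \<oplus> A \<oplus> A)"
    using tensor_id_hom[OF A2 mu_hom] by (simp add: tensor_obj_assoc)
  have M2: "\<one>\<^bsub>A\<^esub> \<otimes> mu \<in> hom C (A \<oplus> A \<oplus> A) (A \<oplus> A)"
    using id_tensor_hom[OF A_Obj mu_hom] by (simp add: tensor_obj_assoc)
  have D1: "delta \<otimes> \<one>\<^bsub>A\<^esub> \<in> hom C (A \<oplus> A) (A \<oplus> A \<oplus> A)"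
    using tensor_id_hom[OF A_Obj delta_hom] by (simp add: tensor_obj_assoc)
  have D2: "\<one>\<^bsub>A \<oplus> A\<^esub> \<otimes> delta \<in> hom C (A \<oplus> A \<oplus> A) (A \<oplus> A \<oplus> A \<oplus> A)"
    using id_tensor_hom[OF A2 delta_hom] by (simp add: tensor_obj_assoc)
  have B: "\<one>\<^bsub>A\<^esub> \<otimes> (brd C A A \<otimes> \<one>\<^bsub>A\<^esub>) \<in> hom C (A \<oplus> A \<oplus> A \<oplus> A) (A \<oplus> A \<oplus> A \<oplus> A)"
    using id_tensor_hom[OF A_Obj tensor_id_hom[OF A_Obj braid_hom[OF A_Obj A_Obj]]]
    by (simp add: tensor_obj_assoc)
  have mm: "mu \<otimes> mu = (\<one>\<^bsub>A\<^esub> \<otimes> mu) \<cdot> (mu \<otimes> \<one>\<^bsub>A \<oplus> A\<^esub>)"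
    using interchange[OF mu_hom id_hom id_hom mu_hom] comp_id_left[OF mu_hom] comp_id_right[OF mu_hom]
    by simp
  have dd: "delta \<otimes> delta = (\<one>\<^bsub>A \<oplus> A\<^esub> \<otimes> delta) \<cdot> (delta \<otimes> \<one>\<^bsub>A\<^esub>)"
    using interchange[OF delta_hom id_hom id_hom delta_hom] comp_id_left[OF delta_hom]
      comp_id_right[OF delta_hom] by simp
  have "delta \<cdot> mu = ((\<one>\<^bsub>A\<^esub> \<otimes> mu) \<cdot> (mu \<otimes> \<one>\<^bsub>A \<oplus> A\<^esub>)) \<cdot>
      ((\<one>\<^bsub>A\<^esub> \<otimes> (brd C A A \<otimes> \<one>\<^bsub>A\<^esub>)) \<cdot> ((\<one>\<^bsub>A \<oplus> A\<^esub> \<otimes> delta) \<cdot> (delta \<otimes> \<one>\<^bsub>A\<^esub>)))"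
    using hopf mm dd unfolding is_hopf_algebra_def by simp
  also have "\<dots> = ((((\<one>\<^bsub>A\<^esub> \<otimes> mu) \<cdot> (mu \<otimes> \<one>\<^bsub>A \<oplus> A\<^esub>)) \<cdot> (\<one>\<^bsub>A\<^esub> \<otimes> (brd C A A \<otimes> \<one>\<^bsub>A\<^esub>))) \<cdot>
      (\<one>\<^bsub>A \<oplus> A\<^esub> \<otimes> delta)) \<cdot> (delta \<otimes> \<one>\<^bsub>A\<^esub>)"
    using comp_assoc[OF D1 D2 B] comp_assoc[OF D1 comp_hom[OF D2 B] comp_hom[OF M1 M2]]
      comp_assoc[OF D2 B comp_hom[OF M1 M2]] by simp
  finally show ?thesis unfolding word_eq_def by (simp add: tensor_obj_assoc)
qed

text \<open>Convolution in Hom(A \<otimes> A, A), the comultiplication of A \<otimes> A being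
  (id \<otimes> \<Psi> \<otimes> id)(\<Delta> \<otimes> \<Delta>).\<close>

abbreviation "comul_AA \<equiv> [([], Comul, [A]), ([A, A], Comul, []), ([A], Braid A A, [A])]"

definition convolution :: "('o, 'm) layer list \<Rightarrow> ('o, 'm) layer list \<Rightarrow> ('o, 'm) layer list" where
  "convolution F G = comul_AA @ map (whisker [] [A, A]) F @ map (whisker [A] []) G @ [([], Mul, [])]"

abbreviation "mul_word \<equiv> [([], Mul, [])]"
abbreviation "ant_mul \<equiv> [([], Mul, []), ([], Ant, [])]"
abbreviation "mul_braid_ant \<equiv> [([], Ant, [A]), ([A], Ant, []), ([], Braid A A, []), ([], Mul, [])]"
abbreviation "conv_unit \<equiv> [([], Counit, [A]), ([], Counit, []), ([], Unit, [])]"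

lemma convolution_ant_mul_unit: "word_eq [A, A] (convolution ant_mul conv_unit) ant_mul"
proof -
  have "word_eval [A, A] (convolution ant_mul conv_unit)
    = word_eval [A, A] [([], Comul, [A]), ([A, A], Comul, []), ([A], Braid A A, [A]),
      ([], Mul, [A, A]), ([], Ant, [A, A]), ([A], Counit, [A]), ([A], Counit, [])]"
    by (rule rewrite_eval[OF mul_unit_right_word, where i=7 and l="[]" and r="[]"])
      (simp_all add: rewrite_at_def convolution_def)
  also have "\<dots> = word_eval [A, A] [([], Comul, [A]), ([A, A], Comul, []),
      ([A], Counit, [A, A]), ([A, A], Counit, []), ([], Mul, []), ([], Ant, [])]"
    by (rule interchange_rewrite_eval[OF 
          braid_left_natural[where x=A and d="[A]" and P="[([], Counit, [])]"],
        where i=2 and l="[A]" and r="[A]" and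
        Y="[([], Comul, [A]), ([A, A], Comul, []), ([A], Braid A A, [A]), ([A, A], Counit, [A]),
          ([A, A], Counit, []), ([], Mul, []), ([], Ant, [])]"])
      (simp_all add: rewrite_at_def)
  also have "\<dots> = word_eval [A, A] [([A], Comul, []), ([A, A], Counit, []), ([], Mul, []),
      ([], Ant, [])]"
    by (rule interchange_rewrite_eval[OF counit_right_word,
        where i=0 and l="[]" and r="[A]" and
        Y="[([], Comul, [A]), ([A], Counit, [A]), ([A], Comul, []), ([A, A], Counit, []),
          ([], Mul, []), ([], Ant, [])]"])
      (simp_all add: rewrite_at_def)
  also have "\<dots> = word_eval [A, A] [([], Mul, []), ([], Ant, [])]"
    by (rule rewrite_eval[OF counit_right_word, where i=0 and l="[A]" and r="[]"])
      (simp_all add: rewrite_at_def)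
  finally show ?thesis by (simp add: word_eq_def convolution_def)
qed

lemma convolution_mul_mul_braid_ant_nested:
  "word_eq [A, A] (convolution mul_word mul_braid_ant)
     [([], Comul, [A]), ([A], Braid A A, []), ([A], Comul, [A]), ([A, A], Ant, [A]),
      ([A, A, A], Ant, []), ([A], Mul, [A]), ([], Mul, [A]), ([], Mul, [])]"
proof -
  have "word_eval [A, A] (convolution mul_word mul_braid_ant)
    = word_eval [A, A] [([], Comul, [A]), ([A, A], Comul, []), ([A], Braid A A, [A]),
      ([], Mul, [A, A]), ([A, A], Ant, []), ([A], Braid A A, []), ([A, A], Ant, []), ([A], Mul, []),
      ([], Mul, [])]"
    by (rule interchange_rewrite_eval[OF word_eq_sym[OF
          braid_left_natural[where x=A and d="[A]" and P="[([], Ant, [])]"]],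
        where i=5 and l="[A]" and r="[]" and
        Y="[([], Comul, [A]), ([A, A], Comul, []), ([A], Braid A A, [A]), ([], Mul, [A, A]),
          ([A, A], Ant, []), ([A], Ant, [A]), ([A], Braid A A, []), ([A], Mul, []),
          ([], Mul, [])]"])
      (simp_all add: rewrite_at_def convolution_def)
  also have "\<dots> = word_eval [A, A] [([], Comul, [A]), ([A, A], Comul, []),
      ([A], Braid A A, [A]), ([], Mul, [A, A]), ([A], Braid A A, []), ([A], Ant, [A]),
      ([A, A], Ant, []), ([A], Mul, []), ([], Mul, [])]"
    by (rule rewrite_eval[OF word_eq_sym[OF
          braid_right_natural[where x=A and d="[A]" and P="[([], Ant, [])]"]],
        where i=4 and l="[A]" and r="[]"])
      (simp_all add: rewrite_at_def)
  also have "\<dots> = word_eval [A, A] [([], Comul, [A]), ([A], Braid A A, []), ([A], Comul, [A]),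
      ([], Mul, [A, A]), ([A], Ant, [A]), ([A, A], Ant, []), ([A], Mul, []), ([], Mul, [])]"
    by (rule interchange_rewrite_eval[OF word_eq_sym[OF
          braid_right_natural[where x=A and d="[A]" and P="[([], Comul, [])]"]],
        where i=1 and l="[A]" and r="[]" and
        Y="[([], Comul, [A]), ([A, A], Comul, []), ([A], Braid A A, [A]), ([A, A], Braid A A, []),
          ([], Mul, [A, A]), ([A], Ant, [A]), ([A, A], Ant, []), ([A], Mul, []), ([], Mul, [])]"])
      (simp_all add: rewrite_at_def)
  also have "\<dots> = word_eval [A, A] [([], Comul, [A]), ([A], Braid A A, []), ([A], Comul, [A]),
      ([], Mul, [A, A]), ([A], Ant, [A]), ([A, A], Ant, []), ([], Mul, [A]), ([], Mul, [])]"
    by (rule rewrite_eval[OF word_eq_sym[OF mul_assoc_word], where i=6 and l="[]" and r="[]"])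
      (simp_all add: rewrite_at_def)
  also have "\<dots> = word_eval [A, A] [([], Comul, [A]), ([A], Braid A A, []), ([A], Comul, [A]),
      ([A, A], Ant, [A]), ([A, A, A], Ant, []), ([A], Mul, [A]), ([], Mul, [A]), ([], Mul, [])]"
    by (rule interchange_rewrite_eval[OF mul_assoc_word,
        where i=5 and l="[]" and r="[A]" and
        Y="[([], Comul, [A]), ([A], Braid A A, []), ([A], Comul, [A]), ([A, A], Ant, [A]),
          ([A, A, A], Ant, []), ([], Mul, [A, A]), ([], Mul, [A]), ([], Mul, [])]"])
      (simp_all add: rewrite_at_def)
  finally show ?thesis by (simp add: word_eq_def convolution_def)
qed

lemma nested_antipodes_word:
  "word_eq [A, A]
     [([], Comul, [A]), ([A], Braid A A, []), ([A], Comul, [A]), ([A, A], Ant, [A]),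
      ([A, A, A], Ant, []), ([A], Mul, [A]), ([], Mul, [A]), ([], Mul, [])]
     conv_unit"
  (is "word_eq _ ?W _")
proof -
  have "word_eval [A, A] ?W
    = word_eval [A, A] [([], Comul, [A]), ([A], Braid A A, []), ([A], Counit, [A]),
      ([A], Unit, [A]), ([A, A], Ant, []), ([], Mul, [A]), ([], Mul, [])]"
    by (rule interchange_rewrite_eval[OF antipode_right_word,
        where i=2 and l="[A]" and r="[A]" and
        Y="[([], Comul, [A]), ([A], Braid A A, []), ([A], Comul, [A]), ([A, A], Ant, [A]),
          ([A], Mul, [A]), ([A, A], Ant, []), ([], Mul, [A]), ([], Mul, [])]"])
      (simp_all add: rewrite_at_def)
  also have "\<dots> = word_eval [A, A] [([], Comul, [A]), ([A], Braid A A, []), ([A], Counit, [A]),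
      ([A], Ant, []), ([], Mul, [])]"
    by (rule interchange_rewrite_eval[OF mul_unit_right_word,
        where i=4 and l="[]" and r="[A]" and
        Y="[([], Comul, [A]), ([A], Braid A A, []), ([A], Counit, [A]), ([A], Ant, []),
          ([A], Unit, [A]), ([], Mul, [A]), ([], Mul, [])]"])
      (simp_all add: rewrite_at_def)
  also have "\<dots> = word_eval [A, A] [([], Comul, [A]), ([A, A], Counit, []), ([A], Ant, []),
      ([], Mul, [])]"
    by (rule rewrite_eval[OF braid_right_natural[where x=A and d="[A]" and P="[([], Counit, [])]"],
        where i=1 and l="[A]" and r="[]"])
      (simp_all add: rewrite_at_def)
  also have "\<dots> = word_eval [A, A] [([A], Counit, []), ([], Counit, []), ([], Unit, [])]"
    by (rule interchange_rewrite_eval[OF antipode_right_word,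
        where i=1 and l="[]" and r="[]" and
        Y="[([A], Counit, []), ([], Comul, []), ([A], Ant, []), ([], Mul, [])]"])
      (simp_all add: rewrite_at_def)
  also have "\<dots> = word_eval [A, A] [([], Counit, [A]), ([], Counit, []), ([], Unit, [])]"
    by (rule interchange_eval) simp_all
  finally show ?thesis by (simp add: word_eq_def)
qed

lemma convolution_mul_mul_braid_ant: "word_eq [A, A] (convolution mul_word mul_braid_ant) conv_unit"
  using word_eq_trans[OF convolution_mul_mul_braid_ant_nested nested_antipodes_word] .

lemma convolution_ant_mul_mul: "word_eq [A, A] (convolution ant_mul mul_word) conv_unit"
proof -
  have "word_eval [A, A] (convolution ant_mul mul_word)
    = word_eval [A, A] [([], Mul, []), ([], Comul, []), ([], Ant, [A]), ([], Mul, [])]"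
    by (rule interchange_rewrite_eval[OF word_eq_sym[OF bialgebra_word],
        where i=0 and l="[]" and r="[]" and
        Y="[([], Comul, [A]), ([A, A], Comul, []), ([A], Braid A A, [A]), ([], Mul, [A, A]),
          ([A], Mul, []), ([], Ant, [A]), ([], Mul, [])]"])
      (simp_all add: rewrite_at_def convolution_def)
  also have "\<dots> = word_eval [A, A] [([], Mul, []), ([], Counit, []), ([], Unit, [])]"
    by (rule rewrite_eval[OF antipode_left_word, where i=1 and l="[]" and r="[]"])
      (simp_all add: rewrite_at_def)
  also have "\<dots> = word_eval [A, A] [([], Counit, [A]), ([], Counit, []), ([], Unit, [])]"
    by (rule rewrite_eval[OF counit_mul_word, where i=0 and l="[]" and r="[]"])
      (simp_all add: rewrite_at_def)
  finally show ?thesis by (simp add: word_eq_def convolution_def)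
qed

lemma convolution_unit_mul_braid_ant:
  "word_eq [A, A] (convolution conv_unit mul_braid_ant) mul_braid_ant"
proof -
  have "word_eval [A, A] (convolution conv_unit mul_braid_ant)
    = word_eval [A, A] [([], Comul, [A]), ([A, A], Comul, []), ([A], Braid A A, [A]),
      ([], Counit, [A, A, A]), ([], Counit, [A, A]), ([], Ant, [A]), ([A], Ant, []),
      ([], Braid A A, []), ([], Mul, [])]"
    by (rule interchange_rewrite_eval[OF mul_unit_left_word,
        where i=9 and l="[]" and r="[]" and
        Y="[([], Comul, [A]), ([A, A], Comul, []), ([A], Braid A A, [A]), ([], Counit, [A, A, A]),
          ([], Counit, [A, A]), ([], Ant, [A]), ([A], Ant, []), ([], Braid A A, []), ([], Mul, []),
          ([], Unit, [A]), ([], Mul, [])]"])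
      (simp_all add: rewrite_at_def convolution_def)
  also have "\<dots> = word_eval [A, A] [([], Comul, [A]), ([A, A], Comul, []),
      ([A, A], Counit, [A]), ([], Counit, [A, A]), ([], Ant, [A]), ([A], Ant, []),
      ([], Braid A A, []), ([], Mul, [])]"
    by (rule interchange_rewrite_eval[OF 
          braid_right_natural[where x=A and d="[A]" and P="[([], Counit, [])]"],
        where i=2 and l="[A]" and r="[A]" and
        Y="[([], Comul, [A]), ([A, A], Comul, []), ([A], Braid A A, [A]), ([A], Counit, [A, A]),
          ([], Counit, [A, A]), ([], Ant, [A]), ([A], Ant, []), ([], Braid A A, []),
          ([], Mul, [])]"])
      (simp_all add: rewrite_at_def)
  also have "\<dots> = word_eval [A, A] [([A], Comul, []), ([A], Counit, [A]), ([], Ant, [A]),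
      ([A], Ant, []), ([], Braid A A, []), ([], Mul, [])]"
    by (rule interchange_rewrite_eval[OF counit_left_word,
        where i=0 and l="[]" and r="[A]" and
        Y="[([], Comul, [A]), ([], Counit, [A, A]), ([A], Comul, []), ([A], Counit, [A]),
          ([], Ant, [A]), ([A], Ant, []), ([], Braid A A, []), ([], Mul, [])]"])
      (simp_all add: rewrite_at_def)
  also have "\<dots> = word_eval [A, A] [([], Ant, [A]), ([A], Ant, []), ([], Braid A A, []),
      ([], Mul, [])]"
    by (rule rewrite_eval[OF counit_left_word, where i=0 and l="[A]" and r="[]"])
      (simp_all add: rewrite_at_def)
  finally show ?thesis by (simp add: word_eq_def convolution_def)
qed

lemma comul_AA_coassoc:
  "word_eq [A, A] (comul_AA @ map (whisker [] [A, A]) comul_AA)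
     (comul_AA @ map (whisker [A, A] []) comul_AA)"
proof -
  have "word_eval [A, A] (comul_AA @ map (whisker [] [A, A]) comul_AA)
    = word_eval [A, A] [([], Comul, [A]), ([A, A], Comul, []), ([A, A], Comul, [A]),
      ([A], Braid A A, [A, A]), ([A, A], Braid A A, [A]), ([], Comul, [A, A, A, A]),
      ([A], Braid A A, [A, A, A])]"
    by (rule interchange_rewrite_eval[OF 
          braid_right_natural[where x=A and d="[A]" and P="[([], Comul, [])]"],
        where i=2 and l="[A]" and r="[A]" and
        Y="[([], Comul, [A]), ([A, A], Comul, []), ([A], Braid A A, [A]), ([A], Comul, [A, A]),
          ([], Comul, [A, A, A, A]), ([A], Braid A A, [A, A, A])]"])
      (simp_all add: rewrite_at_def)
  also have "\<dots> = word_eval [A, A] [([], Comul, [A]), ([A], Comul, [A]),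
      ([A, A, A], Comul, []), ([A, A, A], Comul, [A]), ([A, A], Braid A A, [A, A]),
      ([A, A, A], Braid A A, [A]), ([A], Braid A A, [A, A, A])]"
    by (rule interchange_rewrite_eval[OF comul_coassoc_word,
        where i=0 and l="[]" and r="[A]" and
        Y="[([], Comul, [A]), ([], Comul, [A, A]), ([A, A, A], Comul, []), ([A, A, A], Comul, [A]),
          ([A, A], Braid A A, [A, A]), ([A, A, A], Braid A A, [A]), ([A], Braid A A, [A, A, A])]"])
      (simp_all add: rewrite_at_def)
  also have "\<dots> = word_eval [A, A] [([], Comul, [A]), ([A], Comul, [A]),
      ([A, A, A], Comul, []), ([A, A, A, A], Comul, []), ([A, A], Braid A A, [A, A]),
      ([A, A, A], Braid A A, [A]), ([A], Braid A A, [A, A, A])]"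
    by (rule rewrite_eval[OF comul_coassoc_word, where i=2 and l="[A, A, A]" and r="[]"])
      (simp_all add: rewrite_at_def)
  also have "\<dots> = word_eval [A, A] [([], Comul, [A]), ([A, A], Comul, []),
      ([A], Braid A A, [A]), ([A, A], Comul, [A]), ([A, A, A, A], Comul, []),
      ([A, A, A], Braid A A, [A])]"
    by (rule interchange_rewrite_eval[OF word_eq_sym[OF
          braid_left_natural[where x=A and d="[A]" and P="[([], Comul, [])]"]],
        where i=2 and l="[A]" and r="[A]" and
        Y="[([], Comul, [A]), ([A, A], Comul, []), ([A], Comul, [A, A]), ([A, A], Braid A A, [A]),
          ([A], Braid A A, [A, A]), ([A, A, A, A], Comul, []), ([A, A, A], Braid A A, [A])]"])
      (simp_all add: rewrite_at_def)
  finally show ?thesis by (simp add: word_eq_def)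
qed

lemma convolution_assoc_ant_mul:
  "word_eq [A, A] (convolution ant_mul (convolution mul_word mul_braid_ant))
     (convolution (convolution ant_mul mul_word) mul_braid_ant)"
proof -
  have "word_eval [A, A] (convolution ant_mul (convolution mul_word mul_braid_ant))
    = word_eval [A, A] [([], Comul, [A]), ([A, A], Comul, []), ([A], Braid A A, [A]),
      ([], Comul, [A, A, A]), ([A, A], Comul, [A, A]), ([A], Braid A A, [A, A, A]),
      ([], Mul, [A, A, A, A]), ([], Ant, [A, A, A, A]), ([A], Mul, [A, A]), ([A, A], Ant, [A]),
      ([A, A, A], Ant, []), ([A, A], Braid A A, []), ([A, A], Mul, []), ([A], Mul, []),
      ([], Mul, [])]"
    by (rule interchange_rewrite_eval[OF word_eq_sym[OF comul_AA_coassoc],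
        where i=0 and l="[]" and r="[]" and
        Y="[([], Comul, [A]), ([A, A], Comul, []), ([A], Braid A A, [A]), ([A, A], Comul, [A]),
          ([A, A, A, A], Comul, []), ([A, A, A], Braid A A, [A]), ([], Mul, [A, A, A, A]),
          ([], Ant, [A, A, A, A]), ([A], Mul, [A, A]), ([A, A], Ant, [A]), ([A, A, A], Ant, []),
          ([A, A], Braid A A, []), ([A, A], Mul, []), ([A], Mul, []), ([], Mul, [])]"])
      (simp_all add: rewrite_at_def convolution_def)
  also have "\<dots> = word_eval [A, A] [([], Comul, [A]), ([A, A], Comul, []),
      ([A], Braid A A, [A]), ([], Comul, [A, A, A]), ([A, A], Comul, [A, A]),
      ([A], Braid A A, [A, A, A]), ([], Mul, [A, A, A, A]), ([], Ant, [A, A, A, A]),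
      ([A], Mul, [A, A]), ([A, A], Ant, [A]), ([A, A, A], Ant, []), ([A, A], Braid A A, []),
      ([A, A], Mul, []), ([], Mul, [A]), ([], Mul, [])]"
    by (rule rewrite_eval[OF word_eq_sym[OF mul_assoc_word], where i=13 and l="[]" and r="[]"])
      (simp_all add: rewrite_at_def)
  also have "\<dots> = word_eval [A, A] [([], Comul, [A]), ([A, A], Comul, []),
      ([A], Braid A A, [A]), ([], Comul, [A, A, A]), ([A, A], Comul, [A, A]),
      ([A], Braid A A, [A, A, A]), ([], Mul, [A, A, A, A]), ([], Ant, [A, A, A, A]),
      ([A], Mul, [A, A]), ([], Mul, [A, A]), ([A], Ant, [A]), ([A, A], Ant, []),
      ([A], Braid A A, []), ([A], Mul, []), ([], Mul, [])]"
    by (rule interchange_eval) simp_all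
  finally show ?thesis by (simp add: word_eq_def convolution_def)
qed

lemma convolution_cong:
  assumes F: "word_eq [A, A] F F'" "word_cod [A, A] F = [A]"
    and G: "word_eq [A, A] G G'" "word_cod [A, A] G = [A]"
  shows "word_eq [A, A] (convolution F G) (convolution F' G')"
proof -
  have FF: "word_eq [A, A, A, A] (map (whisker [] [A, A]) F) (map (whisker [] [A, A]) F')"
    and GG: "word_eq [A, A, A] (map (whisker [A] []) G) (map (whisker [A] []) G')"
    using word_eq_whisker[OF F(1), of "[]" "[A, A]"] word_eq_whisker[OF G(1), of "[A]" "[]"] by simp_all
  have "word_cod [A, A] F' = [A]" "word_cod [A, A] G' = [A]"
    using F G unfolding word_eq_def by simp_all
  then have cod: "word_cod [A, A, A, A] (map (whisker [] [A, A]) F) = [A, A, A]"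
    "word_cod [A, A, A, A] (map (whisker [] [A, A]) F') = [A, A, A]"
    "word_cod [A, A, A] (map (whisker [A] []) G) = [A, A]"
    "word_cod [A, A, A] (map (whisker [A] []) G') = [A, A]"
    using F(2) G(2) word_cod_whisker[of "[]" "[A, A]" "[A, A]" F] word_cod_whisker[of "[]" "[A, A]" "[A, A]" F']
      word_cod_whisker[of "[A]" "[A, A]" "[]" G] word_cod_whisker[of "[A]" "[A, A]" "[]" G'] by simp_all
  have "word_eq [A, A, A] (map (whisker [A] []) G @ mul_word) (map (whisker [A] []) G' @ mul_word)"
    using word_eq_append[OF GG] cod word_eq_refl[of "[A, A]" mul_word] by simp
  then have "word_eq [A, A, A, A] (map (whisker [] [A, A]) F @ map (whisker [A] []) G @ mul_word)
      (map (whisker [] [A, A]) F' @ map (whisker [A] []) G' @ mul_word)"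
    using word_eq_append[OF FF] cod by simp
  then show ?thesis
    using word_eq_append[OF word_eq_refl[of "[A, A]" comul_AA]] unfolding convolution_def by simp
qed

lemma antipode_anti_multiplicative: "word_eq [A, A] ant_mul mul_braid_ant"
proof -
  have typed: "well_typed [A, A] ant_mul" "well_typed [A, A] mul_word" "well_typed [A, A] mul_braid_ant"
    by simp_all
  have "word_eval [A, A] ant_mul = word_eval [A, A] (convolution ant_mul conv_unit)"
    using convolution_ant_mul_unit unfolding word_eq_def by simp
  also have "\<dots> = word_eval [A, A] (convolution ant_mul (convolution mul_word mul_braid_ant))"
    using convolution_cong[OF word_eq_refl[OF typed(1)] _ word_eq_sym[OF convolution_mul_mul_braid_ant]]
    unfolding word_eq_def by (simp add: convolution_def)
  also have "\<dots> = word_eval [A, A] (convolution (convolution ant_mul mul_word) mul_braid_ant)"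
    using convolution_assoc_ant_mul unfolding word_eq_def by simp
  also have "\<dots> = word_eval [A, A] (convolution conv_unit mul_braid_ant)"
    using convolution_cong[OF convolution_ant_mul_mul _ word_eq_refl[OF typed(3)]]
    unfolding word_eq_def by (simp add: convolution_def)
  also have "\<dots> = word_eval [A, A] mul_braid_ant"
    using convolution_unit_mul_braid_ant unfolding word_eq_def by simp
  finally show ?thesis unfolding word_eq_def by simp
qed

end

section \<open>The twisted right action\<close>

locale ribbon_hopf = braided_hopf C A mu eta delta eps S for C :: "('o, 'm) bmc"
    and A :: 'o and mu eta delta eps S :: 'm +
  fixes sigma Sinv :: 'm
  assumes ribbon: "is_ribbon_algebra C A mu eta sigma"
    and Sinv_hom [simp]: "Sinv \<in> hom C A A"
    and S_Sinv: "S \<cdot> Sinv = \<one>\<^bsub>A\<^esub>" and Sinv_S: "Sinv \<cdot> S = \<one>\<^bsub>A\<^esub>"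
begin

abbreviation "Twist \<equiv> Box sigma [A] [A]"
abbreviation "AntInv \<equiv> Box Sinv [A] [A]"
abbreviation "BraidInv \<equiv> Box (braid_inv A A) [A, A] [A, A]"

lemma sigma_hom [simp]: "sigma \<in> hom C A A"
  and braid_inv_hom [simp]: "braid_inv A A \<in> hom C (A \<oplus> A) (A \<oplus> A)"
  using ribbon braid_inv(1)[OF A_Obj A_Obj] unfolding is_ribbon_algebra_def iso_mor_def by auto

lemma ant_ant_inv_word: "word_eq [A] [([], Ant, []), ([], AntInv, [])] []"
  unfolding word_eq_def using Sinv_S by simp

lemma ant_inv_ant_word: "word_eq [A] [([], AntInv, []), ([], Ant, [])] []"
  unfolding word_eq_def using S_Sinv by simp

lemma braid_inv_braid_word: "word_eq [A, A] [([], BraidInv, []), ([], Braid A A, [])] []"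
  unfolding word_eq_def using braid_inv(3)[OF A_Obj A_Obj] by simp

lemma twist_mul_word: "word_eq [A, A] [([], Mul, []), ([], Twist, [])]
    [([], Braid A A, []), ([], Braid A A, []), ([], Twist, [A]), ([A], Twist, []), ([], Mul, [])]"
proof -
  have h1: "sigma \<otimes> \<one>\<^bsub>A\<^esub> \<in> hom C (A \<oplus> A) (A \<oplus> A)" by (rule tensor_id_hom) simp_all
  have h2: "\<one>\<^bsub>A\<^esub> \<otimes> sigma \<in> hom C (A \<oplus> A) (A \<oplus> A)" by (rule id_tensor_hom) simp_all
  have h12: "(\<one>\<^bsub>A\<^esub> \<otimes> sigma) \<cdot> (sigma \<otimes> \<one>\<^bsub>A\<^esub>) \<in> hom C (A \<oplus> A) (A \<oplus> A)"
    using comp_hom[OF h1 h2] .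
  have b: "brd C A A \<in> hom C (A \<oplus> A) (A \<oplus> A)" by (simp add: braid_hom)
  have "sigma \<otimes> sigma = (\<one>\<^bsub>A\<^esub> \<otimes> sigma) \<cdot> (sigma \<otimes> \<one>\<^bsub>A\<^esub>)"
    using interchange[OF sigma_hom id_hom id_hom sigma_hom] comp_id_left[OF sigma_hom]
      comp_id_right[OF sigma_hom] by simp
  then have "mu \<cdot> ((sigma \<otimes> sigma) \<cdot> (brd C A A \<cdot> brd C A A))
      = (((mu \<cdot> (\<one>\<^bsub>A\<^esub> \<otimes> sigma)) \<cdot> (sigma \<otimes> \<one>\<^bsub>A\<^esub>)) \<cdot> brd C A A) \<cdot> brd C A A"
    using comp_assoc[OF b b h12] comp_assoc[OF b comp_hom[OF b h12] mu_hom]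
      comp_assoc[OF b h12 mu_hom] comp_assoc[OF h1 h2 mu_hom] by simp
  then show ?thesis
    using ribbon unfolding is_ribbon_algebra_def word_eq_def by simp
qed

lemma antipode_inv_anti_multiplicative:
  "word_eq [A, A] [([], BraidInv, []), ([], AntInv, [A]), ([A], AntInv, []), ([], Mul, [])]
     [([], Mul, []), ([], AntInv, [])]"
proof -
  have "word_eval [A, A] [([], BraidInv, []), ([], AntInv, [A]), ([A], AntInv, []), ([], Mul, [])]
    = word_eval [A, A] [([], BraidInv, []), ([], AntInv, [A]), ([A], AntInv, []), ([], Mul, []),
      ([], Ant, []), ([], AntInv, [])]"
    by (rule rewrite_eval[OF word_eq_sym[OF ant_ant_inv_word], where i=4 and l="[]" and r="[]"])
      (simp_all add: rewrite_at_def)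
  also have "\<dots> = word_eval [A, A] [([], BraidInv, []), ([], AntInv, [A]), ([A], AntInv, []),
      ([], Ant, [A]), ([A], Ant, []), ([], Braid A A, []), ([], Mul, []), ([], AntInv, [])]"
    by (rule rewrite_eval[OF antipode_anti_multiplicative, where i=3 and l="[]" and r="[]"])
      (simp_all add: rewrite_at_def)
  also have "\<dots> = word_eval [A, A] [([], BraidInv, []), ([A], AntInv, []), ([A], Ant, []),
      ([], Braid A A, []), ([], Mul, []), ([], AntInv, [])]"
    by (rule interchange_rewrite_eval[OF ant_inv_ant_word,
        where i=1 and l="[]" and r="[A]" and
        Y="[([], BraidInv, []), ([], AntInv, [A]), ([], Ant, [A]), ([A], AntInv, []),
          ([A], Ant, []), ([], Braid A A, []), ([], Mul, []), ([], AntInv, [])]"])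
      (simp_all add: rewrite_at_def)
  also have "\<dots> = word_eval [A, A] [([], BraidInv, []), ([], Braid A A, []), ([], Mul, []),
      ([], AntInv, [])]"
    by (rule rewrite_eval[OF ant_inv_ant_word, where i=1 and l="[A]" and r="[]"])
      (simp_all add: rewrite_at_def)
  also have "\<dots> = word_eval [A, A] [([], Mul, []), ([], AntInv, [])]"
    by (rule rewrite_eval[OF braid_inv_braid_word, where i=0 and l="[]" and r="[]"])
      (simp_all add: rewrite_at_def)
  finally show ?thesis by (simp add: word_eq_def)
qed

lemma twisted_antipode_inv_anti_multiplicative:
  "word_eq [A, A] [([], Mul, []), ([], AntInv, []), ([], Twist, [])]
     [([], Braid A A, []), ([], AntInv, [A]), ([], Twist, [A]), ([A], AntInv, []), ([A], Twist, []),
      ([], Mul, [])]"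
proof -
  have "word_eval [A, A] [([], Mul, []), ([], AntInv, []), ([], Twist, [])]
    = word_eval [A, A] [([], BraidInv, []), ([], AntInv, [A]), ([A], AntInv, []), ([], Mul, []),
      ([], Twist, [])]"
    by (rule rewrite_eval[OF word_eq_sym[OF antipode_inv_anti_multiplicative],
        where i=0 and l="[]" and r="[]"])
      (simp_all add: rewrite_at_def)
  also have "\<dots> = word_eval [A, A] [([], BraidInv, []), ([], AntInv, [A]), ([A], AntInv, []),
      ([], Braid A A, []), ([], Braid A A, []), ([], Twist, [A]), ([A], Twist, []), ([], Mul, [])]"
    by (rule rewrite_eval[OF twist_mul_word, where i=3 and l="[]" and r="[]"])
      (simp_all add: rewrite_at_def)
  also have "\<dots> = word_eval [A, A] [([], BraidInv, []), ([], AntInv, [A]), ([], Braid A A, []),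
      ([], AntInv, [A]), ([], Braid A A, []), ([], Twist, [A]), ([A], Twist, []), ([], Mul, [])]"
    by (rule rewrite_eval[OF word_eq_sym[OF
          braid_right_natural[where x=A and d="[A]" and P="[([], AntInv, [])]"]],
        where i=2 and l="[]" and r="[]"])
      (simp_all add: rewrite_at_def)
  also have "\<dots> = word_eval [A, A] [([], BraidInv, []), ([], Braid A A, []), ([A], AntInv, []),
      ([], AntInv, [A]), ([], Braid A A, []), ([], Twist, [A]), ([A], Twist, []), ([], Mul, [])]"
    by (rule rewrite_eval[OF word_eq_sym[OF
          braid_left_natural[where x=A and d="[A]" and P="[([], AntInv, [])]"]],
        where i=1 and l="[]" and r="[]"])
      (simp_all add: rewrite_at_def)
  also have "\<dots> = word_eval [A, A] [([], BraidInv, []), ([], Braid A A, []), ([], AntInv, [A]),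
      ([], Braid A A, []), ([], AntInv, [A]), ([], Twist, [A]), ([A], Twist, []), ([], Mul, [])]"
    by (rule interchange_rewrite_eval[OF word_eq_sym[OF
          braid_right_natural[where x=A and d="[A]" and P="[([], AntInv, [])]"]],
        where i=3 and l="[]" and r="[]" and
        Y="[([], BraidInv, []), ([], Braid A A, []), ([], AntInv, [A]), ([A], AntInv, []),
          ([], Braid A A, []), ([], Twist, [A]), ([A], Twist, []), ([], Mul, [])]"])
      (simp_all add: rewrite_at_def)
  also have "\<dots> = word_eval [A, A] [([], BraidInv, []), ([], Braid A A, []),
      ([], Braid A A, []), ([A], AntInv, []), ([], AntInv, [A]), ([], Twist, [A]), ([A], Twist, []),
      ([], Mul, [])]"
    by (rule rewrite_eval[OF word_eq_sym[OF
          braid_left_natural[where x=A and d="[A]" and P="[([], AntInv, [])]"]],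
        where i=2 and l="[]" and r="[]"])
      (simp_all add: rewrite_at_def)
  also have "\<dots> = word_eval [A, A] [([], Braid A A, []), ([A], AntInv, []), ([], AntInv, [A]),
      ([], Twist, [A]), ([A], Twist, []), ([], Mul, [])]"
    by (rule rewrite_eval[OF braid_inv_braid_word, where i=0 and l="[]" and r="[]"])
      (simp_all add: rewrite_at_def)
  also have "\<dots> = word_eval [A, A] [([], Braid A A, []), ([], AntInv, [A]), ([], Twist, [A]),
      ([A], AntInv, []), ([A], Twist, []), ([], Mul, [])]"
    by (rule interchange_eval) simp_all
  finally show ?thesis by (simp add: word_eq_def)
qed

end

locale ribbon_hopf_bimodule = ribbon_hopf C A mu eta delta eps S sigma Sinv
  for C :: "('o, 'm) bmc" and A :: 'o and mu eta delta eps S sigma Sinv :: 'm +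
  fixes M :: 'o and lact ract :: 'm
  assumes bimodule: "is_bimodule C A mu eta M lact ract"
begin

abbreviation "LAct \<equiv> Box lact [A, M] [M]"
abbreviation "RAct \<equiv> Box ract [M, A] [M]"

lemma M_Obj [simp]: "M \<in> Obj C"
  and lact_hom [simp]: "lact \<in> hom C (A \<oplus> M) M" and ract_hom [simp]: "ract \<in> hom C (M \<oplus> A) M"
  using bimodule unfolding is_bimodule_def by auto

lemma lact_assoc_word:
  "word_eq [A, A, M] [([], Mul, [M]), ([], LAct, [])] [([A], LAct, []), ([], LAct, [])]"
  using bimodule unfolding is_bimodule_def word_eq_def by simp

lemma ract_assoc_word:
  "word_eq [M, A, A] [([], RAct, [A]), ([], RAct, [])] [([M], Mul, []), ([], RAct, [])]"
  using bimodule unfolding is_bimodule_def word_eq_def by simp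

lemma bimodule_word:
  "word_eq [A, M, A] [([A], RAct, []), ([], LAct, [])] [([], LAct, [A]), ([], RAct, [])]"
  using bimodule unfolding is_bimodule_def word_eq_def by simp

abbreviation "twisted_ract_word \<equiv>
  [([M], Comul, []), ([], Braid M A, [A]), ([], AntInv, [M, A]), ([], Twist, [M, A]), ([], LAct, [A]),
   ([], RAct, [])]"

lemma twisted_ract_word_mul_expand:
  "word_eq [M, A, A] (([M], Mul, []) # twisted_ract_word)
     [([M], Comul, [A]), ([M, A, A], Comul, []), ([M, A], Braid A A, [A]),
      ([], Braid M A, [A, A, A]), ([A], Braid M A, [A, A]), ([A, A, M], Mul, []),
      ([], Braid A A, [M, A]), ([], AntInv, [A, M, A]), ([], Twist, [A, M, A]),
      ([A], AntInv, [M, A]), ([A], Twist, [M, A]), ([], Mul, [M, A]), ([], LAct, [A]),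
      ([], RAct, [])]"
proof -
  have "word_eval [M, A, A] (([M], Mul, []) # twisted_ract_word)
    = word_eval [M, A, A] [([M], Comul, [A]), ([M, A, A], Comul, []), ([M, A], Braid A A, [A]),
      ([M], Mul, [A, A]), ([M, A], Mul, []), ([], Braid M A, [A]), ([], AntInv, [M, A]),
      ([], Twist, [M, A]), ([], LAct, [A]), ([], RAct, [])]"
    by (rule rewrite_eval[OF bialgebra_word, where i=0 and l="[M]" and r="[]"])
      (simp_all add: rewrite_at_def)
  also have "\<dots> = word_eval [M, A, A] [([M], Comul, [A]), ([M, A, A], Comul, []),
      ([M, A], Braid A A, [A]), ([], Braid M A, [A, A, A]), ([A], Braid M A, [A, A]),
      ([], Mul, [M, A, A]), ([A, M], Mul, []), ([], AntInv, [M, A]), ([], Twist, [M, A]),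
      ([], LAct, [A]), ([], RAct, [])]"
    by (rule interchange_rewrite_eval[OF word_eq_sym[OF
          braid_right_natural[where x=M and d="[A, A]" and P="[([], Mul, [])]"]],
        where i=3 and l="[]" and r="[A, A]" and
        Y="[([M], Comul, [A]), ([M, A, A], Comul, []), ([M, A], Braid A A, [A]), ([M], Mul, [A, A]),
          ([], Braid M A, [A, A]), ([A, M], Mul, []), ([], AntInv, [M, A]), ([], Twist, [M, A]),
          ([], LAct, [A]), ([], RAct, [])]"])
      (simp_all add: rewrite_at_def)
  also have "\<dots> = word_eval [M, A, A] [([M], Comul, [A]), ([M, A, A], Comul, []),
      ([M, A], Braid A A, [A]), ([], Braid M A, [A, A, A]), ([A], Braid M A, [A, A]),
      ([A, A, M], Mul, []), ([], Braid A A, [M, A]), ([], AntInv, [A, M, A]),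
      ([], Twist, [A, M, A]), ([A], AntInv, [M, A]), ([A], Twist, [M, A]), ([], Mul, [M, A]),
      ([], LAct, [A]), ([], RAct, [])]"
    by (rule interchange_rewrite_eval[OF twisted_antipode_inv_anti_multiplicative,
        where i=6 and l="[]" and r="[M, A]" and
        Y="[([M], Comul, [A]), ([M, A, A], Comul, []), ([M, A], Braid A A, [A]),
          ([], Braid M A, [A, A, A]), ([A], Braid M A, [A, A]), ([A, A, M], Mul, []),
          ([], Mul, [M, A]), ([], AntInv, [M, A]), ([], Twist, [M, A]), ([], LAct, [A]),
          ([], RAct, [])]"])
      (simp_all add: rewrite_at_def)
  finally show ?thesis by (simp add: word_eq_def)
qed

lemma twisted_ract_word_regroup_actions:
  "word_eq [M, A, A]
     [([M], Comul, [A]), ([M, A, A], Comul, []), ([M, A], Braid A A, [A]),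
      ([], Braid M A, [A, A, A]), ([A], Braid M A, [A, A]), ([A, A, M], Mul, []),
      ([], Braid A A, [M, A]), ([], AntInv, [A, M, A]), ([], Twist, [A, M, A]),
      ([A], AntInv, [M, A]), ([A], Twist, [M, A]), ([], Mul, [M, A]), ([], LAct, [A]),
      ([], RAct, [])]
     [([M], Comul, [A]), ([M, A, A], Comul, []), ([M, A], Braid A A, [A]),
      ([], Braid M A, [A, A, A]), ([A], Braid M A, [A, A]), ([], Braid A A, [M, A, A]),
      ([], AntInv, [A, M, A, A]), ([], Twist, [A, M, A, A]), ([A], AntInv, [M, A, A]),
      ([A], Twist, [M, A, A]), ([A], LAct, [A, A]), ([A], RAct, [A]), ([], LAct, [A]),
      ([], RAct, [])]"
  (is "word_eq _ ?W _")
proof -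
  have "word_eval [M, A, A] ?W
    = word_eval [M, A, A] [([M], Comul, [A]), ([M, A, A], Comul, []), ([M, A], Braid A A, [A]),
      ([], Braid M A, [A, A, A]), ([A], Braid M A, [A, A]), ([A, A, M], Mul, []),
      ([], Braid A A, [M, A]), ([], AntInv, [A, M, A]), ([], Twist, [A, M, A]),
      ([A], AntInv, [M, A]), ([A], Twist, [M, A]), ([A], LAct, [A]), ([], LAct, [A]),
      ([], RAct, [])]"
    by (rule rewrite_eval[OF lact_assoc_word, where i=11 and l="[]" and r="[A]"])
      (simp_all add: rewrite_at_def)
  also have "\<dots> = word_eval [M, A, A] [([M], Comul, [A]), ([M, A, A], Comul, []),
      ([M, A], Braid A A, [A]), ([], Braid M A, [A, A, A]), ([A], Braid M A, [A, A]),
      ([], Braid A A, [M, A, A]), ([], AntInv, [A, M, A, A]), ([], Twist, [A, M, A, A]),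
      ([A], AntInv, [M, A, A]), ([A], Twist, [M, A, A]), ([A], LAct, [A, A]), ([], LAct, [A, A]),
      ([], RAct, [A]), ([], RAct, [])]"
    by (rule interchange_rewrite_eval[OF word_eq_sym[OF ract_assoc_word],
        where i=12 and l="[]" and r="[]" and
        Y="[([M], Comul, [A]), ([M, A, A], Comul, []), ([M, A], Braid A A, [A]),
          ([], Braid M A, [A, A, A]), ([A], Braid M A, [A, A]), ([], Braid A A, [M, A, A]),
          ([], AntInv, [A, M, A, A]), ([], Twist, [A, M, A, A]), ([A], AntInv, [M, A, A]),
          ([A], Twist, [M, A, A]), ([A], LAct, [A, A]), ([], LAct, [A, A]), ([M], Mul, []),
          ([], RAct, [])]"])
      (simp_all add: rewrite_at_def)
  also have "\<dots> = word_eval [M, A, A] [([M], Comul, [A]), ([M, A, A], Comul, []),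
      ([M, A], Braid A A, [A]), ([], Braid M A, [A, A, A]), ([A], Braid M A, [A, A]),
      ([], Braid A A, [M, A, A]), ([], AntInv, [A, M, A, A]), ([], Twist, [A, M, A, A]),
      ([A], AntInv, [M, A, A]), ([A], Twist, [M, A, A]), ([A], LAct, [A, A]), ([A], RAct, [A]),
      ([], LAct, [A]), ([], RAct, [])]"
    by (rule rewrite_eval[OF word_eq_sym[OF bimodule_word], where i=11 and l="[]" and r="[A]"])
      (simp_all add: rewrite_at_def)
  finally show ?thesis by (simp add: word_eq_def)
qed

lemma twisted_ract_word_separate:
  "word_eq [M, A, A]
     [([M], Comul, [A]), ([M, A, A], Comul, []), ([M, A], Braid A A, [A]),
      ([], Braid M A, [A, A, A]), ([A], Braid M A, [A, A]), ([], Braid A A, [M, A, A]),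
      ([], AntInv, [A, M, A, A]), ([], Twist, [A, M, A, A]), ([A], AntInv, [M, A, A]),
      ([A], Twist, [M, A, A]), ([A], LAct, [A, A]), ([A], RAct, [A]), ([], LAct, [A]),
      ([], RAct, [])]
     (map (whisker [] [A]) twisted_ract_word @ twisted_ract_word)"
  (is "word_eq _ ?W _")
proof -
  have "word_eval [M, A, A] ?W
    = word_eval [M, A, A] [([M], Comul, [A]), ([M, A, A], Comul, []), ([M, A], Braid A A, [A]),
      ([], Braid M A, [A, A, A]), ([A], Braid M A, [A, A]), ([], AntInv, [A, M, A, A]),
      ([], Braid A A, [M, A, A]), ([A], Twist, [M, A, A]), ([], AntInv, [A, M, A, A]),
      ([], Twist, [A, M, A, A]), ([A], LAct, [A, A]), ([A], RAct, [A]), ([], LAct, [A]),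
      ([], RAct, [])]"
    by (rule interchange_rewrite_eval[OF 
          braid_left_natural[where x=A and d="[A]" and P="[([], AntInv, [])]"],
        where i=5 and l="[]" and r="[M, A, A]" and
        Y="[([M], Comul, [A]), ([M, A, A], Comul, []), ([M, A], Braid A A, [A]),
          ([], Braid M A, [A, A, A]), ([A], Braid M A, [A, A]), ([], Braid A A, [M, A, A]),
          ([A], AntInv, [M, A, A]), ([A], Twist, [M, A, A]), ([], AntInv, [A, M, A, A]),
          ([], Twist, [A, M, A, A]), ([A], LAct, [A, A]), ([A], RAct, [A]), ([], LAct, [A]),
          ([], RAct, [])]"])
      (simp_all add: rewrite_at_def)
  also have "\<dots> = word_eval [M, A, A] [([M], Comul, [A]), ([M, A, A], Comul, []),
      ([M, A], Braid A A, [A]), ([], Braid M A, [A, A, A]), ([A], Braid M A, [A, A]),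
      ([], AntInv, [A, M, A, A]), ([], Twist, [A, M, A, A]), ([], Braid A A, [M, A, A]),
      ([], AntInv, [A, M, A, A]), ([], Twist, [A, M, A, A]), ([A], LAct, [A, A]), ([A], RAct, [A]),
      ([], LAct, [A]), ([], RAct, [])]"
    by (rule rewrite_eval[OF braid_left_natural[where x=A and d="[A]" and P="[([], Twist, [])]"],
        where i=6 and l="[]" and r="[M, A, A]"])
      (simp_all add: rewrite_at_def)
  also have "\<dots> = word_eval [M, A, A] [([M], Comul, [A]), ([M, A, A], Comul, []),
      ([], Braid M A, [A, A, A]), ([], AntInv, [M, A, A, A]), ([], Twist, [M, A, A, A]),
      ([], LAct, [A, A, A]), ([], RAct, [A, A]), ([], Braid M A, [A]), ([], AntInv, [M, A]),
      ([], Twist, [M, A]), ([], LAct, [A]), ([], RAct, [])]"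
    by (rule interchange_rewrite_eval[OF 
          braid_left_natural[where x=A and d="[A, M, A]" and P="[([], LAct, [A]), ([], RAct, [])]"],
        where i=5 and l="[]" and r="[A]" and
        Y="[([M], Comul, [A]), ([M, A, A], Comul, []), ([], Braid M A, [A, A, A]),
          ([], AntInv, [M, A, A, A]), ([], Twist, [M, A, A, A]), ([A, M], Braid A A, [A]),
          ([A], Braid M A, [A, A]), ([], Braid A A, [M, A, A]), ([A], LAct, [A, A]),
          ([A], RAct, [A]), ([], AntInv, [M, A]), ([], Twist, [M, A]), ([], LAct, [A]),
          ([], RAct, [])]"])
      (simp_all add: rewrite_at_def)
  also have "\<dots> = word_eval [M, A, A] [([M], Comul, [A]), ([], Braid M A, [A, A]),
      ([], AntInv, [M, A, A]), ([], Twist, [M, A, A]), ([], LAct, [A, A]), ([], RAct, [A]),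
      ([M], Comul, []), ([], Braid M A, [A]), ([], AntInv, [M, A]), ([], Twist, [M, A]),
      ([], LAct, [A]), ([], RAct, [])]"
    by (rule interchange_eval) simp_all
  finally show ?thesis by (simp add: word_eq_def)
qed

lemma twisted_ract_eq_word_eval:
  "twisted_ract C A M delta sigma Sinv lact ract = word_eval [M, A] twisted_ract_word"
proof -
  have iMA: "\<one>\<^bsub>M \<oplus> A\<^esub> \<in> hom C (M \<oplus> A) (M \<oplus> A)" by (simp add: id_hom)
  have h1: "\<one>\<^bsub>M\<^esub> \<otimes> delta \<in> hom C (M \<oplus> A) (M \<oplus> A \<oplus> A)" by (rule id_tensor_hom) simp_all
  have h2: "brd C M A \<otimes> \<one>\<^bsub>A\<^esub> \<in> hom C (M \<oplus> A \<oplus> A) (A \<oplus> M \<oplus> A)"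
    using tensor_id_hom[OF A_Obj braid_hom[OF M_Obj A_Obj]] by (simp add: tensor_obj_assoc)
  have h3: "Sinv \<otimes> \<one>\<^bsub>M \<oplus> A\<^esub> \<in> hom C (A \<oplus> M \<oplus> A) (A \<oplus> M \<oplus> A)" by (rule tensor_id_hom) simp_all
  have h4: "sigma \<otimes> \<one>\<^bsub>M \<oplus> A\<^esub> \<in> hom C (A \<oplus> M \<oplus> A) (A \<oplus> M \<oplus> A)" by (rule tensor_id_hom) simp_all
  have h5: "lact \<otimes> \<one>\<^bsub>A\<^esub> \<in> hom C (A \<oplus> M \<oplus> A) (M \<oplus> A)"
    using tensor_id_hom[OF A_Obj lact_hom] by (simp add: tensor_obj_assoc)
  have "(sigma \<cdot> Sinv) \<otimes> (\<one>\<^bsub>M\<^esub> \<otimes> \<one>\<^bsub>A\<^esub>) = (sigma \<otimes> \<one>\<^bsub>M \<oplus> A\<^esub>) \<cdot> (Sinv \<otimes> \<one>\<^bsub>M \<oplus> A\<^esub>)"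
    using interchange[OF Sinv_hom sigma_hom iMA iMA] comp_id_left[OF iMA] tensor_id by simp
  then have "twisted_ract C A M delta sigma Sinv lact ract =
      ract \<cdot> ((lact \<otimes> \<one>\<^bsub>A\<^esub>) \<cdot> (((sigma \<otimes> \<one>\<^bsub>M \<oplus> A\<^esub>) \<cdot> (Sinv \<otimes> \<one>\<^bsub>M \<oplus> A\<^esub>)) \<cdot>
        ((brd C M A \<otimes> \<one>\<^bsub>A\<^esub>) \<cdot> (\<one>\<^bsub>M\<^esub> \<otimes> delta))))"
    unfolding twisted_ract_def by simp
  also have "\<dots> = (((((ract \<cdot> (lact \<otimes> \<one>\<^bsub>A\<^esub>)) \<cdot> (sigma \<otimes> \<one>\<^bsub>M \<oplus> A\<^esub>)) \<cdot> (Sinv \<otimes> \<one>\<^bsub>M \<oplus> A\<^esub>)) \<cdot>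
      (brd C M A \<otimes> \<one>\<^bsub>A\<^esub>)) \<cdot> (\<one>\<^bsub>M\<^esub> \<otimes> delta))"
    using comp_assoc[OF comp_hom[OF comp_hom[OF h1 h2] comp_hom[OF h3 h4]] h5 ract_hom]
      comp_assoc[OF comp_hom[OF h1 h2] comp_hom[OF h3 h4] comp_hom[OF h5 ract_hom]]
      comp_assoc[OF h3 h4 comp_hom[OF h5 ract_hom]]
      comp_assoc[OF h1 h2 comp_hom[OF h3 comp_hom[OF h4 comp_hom[OF h5 ract_hom]]]] by simp
  finally show ?thesis by (simp add: tensor_obj_assoc)
qed

theorem twisted_ract_action:
  "twisted_ract C A M delta sigma Sinv lact ract \<cdot> (twisted_ract C A M delta sigma Sinv lact ract \<otimes> \<one>\<^bsub>A\<^esub>)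
   = twisted_ract C A M delta sigma Sinv lact ract \<cdot> (\<one>\<^bsub>M\<^esub> \<otimes> mu)"
proof -
  let ?R = "twisted_ract C A M delta sigma Sinv lact ract"
  have W: "well_typed [M, A] twisted_ract_word" by simp
  have R: "?R \<in> hom C (M \<oplus> A) M" using word_eval_hom[OF W] twisted_ract_eq_word_eval by simp
  have "word_eval [M, A, A] (map (whisker [] [A]) twisted_ract_word) = ?R \<otimes> \<one>\<^bsub>A\<^esub>"
    using word_eval_whisker[OF W, of "[]" "[A]"] tensor_unit(1)[OF tensor_id_hom[OF A_Obj R]]
    by (simp add: twisted_ract_eq_word_eval)
  then have "word_eval [M, A, A] (map (whisker [] [A]) twisted_ract_word @ twisted_ract_word) =
      ?R \<cdot> (?R \<otimes> \<one>\<^bsub>A\<^esub>)"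
    using word_eval_append[OF well_typed_whisker[OF W, of "[]" "[A]"], of twisted_ract_word]
      word_cod_whisker[of "[]" "[M, A]" "[A]" twisted_ract_word] W
    by (simp add: twisted_ract_eq_word_eval)
  moreover have "word_eval [M, A, A] (([M], Mul, []) # twisted_ract_word) = ?R \<cdot> (\<one>\<^bsub>M\<^esub> \<otimes> mu)"
    by (simp add: twisted_ract_eq_word_eval)
  ultimately show ?thesis
    using word_eq_trans[OF word_eq_trans[OF twisted_ract_word_mul_expand
        twisted_ract_word_regroup_actions] twisted_ract_word_separate]
    unfolding word_eq_def by simp
qed

end

theorem mainTheorem4:
  fixes C :: "('o, 'm) bmc"
    and A M :: 'o
    and mu eta sigma delta eps S Sinv lact ract :: 'm
  assumes "braided_strict_monoidal C"
    and "is_ribbon_algebra C A mu eta sigma"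
    and "is_hopf_algebra C A mu eta delta eps S"
    and "Sinv \<in> hom C A A"
    and "cmp C S Sinv = idm C A" and "cmp C Sinv S = idm C A"
    and "is_bimodule C A mu eta M lact ract"
  shows "cmp C (twisted_ract C A M delta sigma Sinv lact ract)
            (tar C (twisted_ract C A M delta sigma Sinv lact ract) (idm C A))
       = cmp C (twisted_ract C A M delta sigma Sinv lact ract) (tar C (idm C M) mu)"
proof -
  interpret ribbon_hopf_bimodule C A mu eta delta eps S sigma Sinv M lact ract
    using assms by unfold_locales
  show ?thesis by (rule twisted_ract_action)
qed

end
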